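(* Let $\alpha>-1$, $w\in\mathbb{D}$, $\phi\equiv w$ (constant map), and $\psi$ analytic on $\mathbb{D}$ with $C_{\psi,\phi}$ bounded on $L^2_a(dA_\alpha)$. (i) If $k^{\alpha}_w=\mu\psi$ for some $\mu\ne0$, then $W(C_{\psi,\phi})=[0,\bar\mu\|\psi\|^2]$ (the line segment from $0$ to $\bar\mu\|\psi\|^2$). (ii) If $k^\alpha_w\perp\psi$, then $W(C_{\psi,\phi})$ is the closed disc centred at the origin with radius $\dfrac{\|\psi\|}{2(1-|w|^2)^{\frac{\alpha}{2}+1}}$. (iii) Otherwise, $W(C_{\psi,\phi})$ is a closed elliptical disc with foci at $0$ and $\psi(w)$.
   Context: $\mathbb{D}$ is the open unit disc. $L^2_a(dA_\alpha)$ is the weighted Bergman space of analytic $f$ on $\mathbb{D}$ with $\int_{\mathbb{D}}|f|^2dA_\alpha<\infty$, $dA_{\alpha}(z)=(\alpha+1)(1-|z|^2)^{\alpha}dA(z)$, $dA$ normalized area measure, with norm $\|\cdot\|$. Its reproducing kernel at $w$ is $k^\alpha_w(z)=(1-\bar wz)^{-(\alpha+2)}$. $C_{\psi,\phi}f=\psi\cdot(f\circ\phi)$. $W(T)=\{\langle Tf,f\rangle:\|f\|=1\}$. *)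

theory Defs
  imports "HOL-Analysis.Analysis"
begin

text \<open>Weighted area measure dA_alpha on the open unit disc:
  dA_alpha(z) = (alpha+1) (1-|z|^2)^alpha dA(z), with dA = dx dy / pi the normalized area measure.\<close>
definition dA_alpha :: "real \<Rightarrow> complex measure" where
  "dA_alpha \<alpha> = density (restrict_space lborel (ball 0 1))
      (\<lambda>z. ennreal ((\<alpha> + 1) / pi * (1 - (cmod z)\<^sup>2) powr \<alpha>))"

text \<open>The weighted Bergman space L^2_a(dA_alpha): analytic functions on the disc
  (values outside the disc are irrelevant) that are square integrable.\<close>
definition bergman :: "real \<Rightarrow> (complex \<Rightarrow> complex) set" where
  "bergman \<alpha> = {f. f holomorphic_on ball 0 1 \<and>
      integrable (dA_alpha \<alpha>) (\<lambda>z. (cmod (f z))\<^sup>2)}"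

definition bergman_inner :: "real \<Rightarrow> (complex \<Rightarrow> complex) \<Rightarrow> (complex \<Rightarrow> complex) \<Rightarrow> complex" where
  "bergman_inner \<alpha> f g = (\<integral>z. f z * cnj (g z) \<partial>dA_alpha \<alpha>)"

definition bergman_norm :: "real \<Rightarrow> (complex \<Rightarrow> complex) \<Rightarrow> real" where
  "bergman_norm \<alpha> f = sqrt (\<integral>z. (cmod (f z))\<^sup>2 \<partial>dA_alpha \<alpha>)"

definition bergman_kernel :: "real \<Rightarrow> complex \<Rightarrow> complex \<Rightarrow> complex" where
  "bergman_kernel \<alpha> w z = (1 - cnj w * z) powr (- (of_real \<alpha> + 2))"

definition wcomp :: "(complex \<Rightarrow> complex) \<Rightarrow> (complex \<Rightarrow> complex) \<Rightarrow> (complex \<Rightarrow> complex) \<Rightarrow> (complex \<Rightarrow> complex)" where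
  "wcomp \<psi> \<phi> f = (\<lambda>z. \<psi> z * f (\<phi> z))"

definition bounded_on_bergman :: "real \<Rightarrow> ((complex \<Rightarrow> complex) \<Rightarrow> (complex \<Rightarrow> complex)) \<Rightarrow> bool" where
  "bounded_on_bergman \<alpha> T \<longleftrightarrow> (\<forall>f\<in>bergman \<alpha>. T f \<in> bergman \<alpha>) \<and>
     (\<exists>M. \<forall>f\<in>bergman \<alpha>. bergman_norm \<alpha> (T f) \<le> M * bergman_norm \<alpha> f)"

definition numerical_range :: "real \<Rightarrow> ((complex \<Rightarrow> complex) \<Rightarrow> (complex \<Rightarrow> complex)) \<Rightarrow> complex set" where
  "numerical_range \<alpha> T = {bergman_inner \<alpha> (T f) f | f. f \<in> bergman \<alpha> \<and> bergman_norm \<alpha> f = 1}"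

end

theory Submission
  imports Defs "HOL-Complex_Analysis.Complex_Analysis"
begin

(*
  Evaluation at w is the inner product with the kernel k_w, so C_{psi,w} f = <f, k_w> psi is a
  rank-one operator and <C f, f> = <f, k_w> <psi, f>.  Write psi = c k_w + gamma q with q a unit
  vector orthogonal to k_w.  In the coordinates x = <f, e>, y = <f, q> of f along e = k_w / |k_w|
  and q, the value is |k_w| x (beta cnj x + gamma cnj y) with beta = c |k_w|, and as (x, y) ranges
  over the unit ball of C^2 these values fill the elliptical disc with foci 0 and <psi, k_w> = psi(w)
  and major axis |psi| |k_w|.  The disc degenerates to the segment [0, psi(w)] when psi and k_w are
  parallel (equality in Cauchy-Schwarz), and to a round disc when psi(w) = 0.

  The reproducing property and |k_w|^2 = k_w(w) = (1 - |w|^2)^-(alpha + 2) come from expanding f in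
  its Taylor series and cnj k_w in its binomial series and integrating termwise over the discs
  |z| < r, r -> 1: the weight is rotation invariant, so the monomials z^n are orthogonal, and their
  moments n! / (alpha + 2)_n are the reciprocals of the binomial coefficients of k_w.
*)

section \<open>Elliptical discs as images of a quadratic map\<close>

text \<open>With \<open>A = \<beta> cnj x + \<gamma> cnj y\<close> and \<open>B = \<gamma> x - \<beta> y\<close> one has \<open>v = x A\<close>,
  \<open>v - \<beta> = cnj y B - (1 - \<tau>) \<beta>\<close> and \<open>|A|\<^sup>2 + |B|\<^sup>2 = s\<^sup>2 \<tau>\<close> for \<open>\<tau> = |x|\<^sup>2 + |y|\<^sup>2\<close>;
  conclude by Cauchy-Schwarz.\<close>
lemma quadratic_map_in_ellipse:
  fixes x y \<beta> \<gamma> :: complex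
  assumes xy: "(cmod x)\<^sup>2 + (cmod y)\<^sup>2 \<le> 1"
  defines "v \<equiv> x * (\<beta> * cnj x + \<gamma> * cnj y)"
  shows "cmod v + cmod (v - \<beta>) \<le> sqrt ((cmod \<beta>)\<^sup>2 + (cmod \<gamma>)\<^sup>2)"
proof -
  define \<tau> where "\<tau> = (cmod x)\<^sup>2 + (cmod y)\<^sup>2"
  define s where "s = sqrt ((cmod \<beta>)\<^sup>2 + (cmod \<gamma>)\<^sup>2)"
  define A where "A = \<beta> * cnj x + \<gamma> * cnj y"
  define B where "B = \<gamma> * x - \<beta> * y"
  have \<tau>: "0 \<le> \<tau>" "\<tau> \<le> 1" and s: "0 \<le> s" "cmod \<beta> \<le> s"
    using xy by (simp_all add: \<tau>_def s_def real_le_rsqrt)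
  have T: "x * cnj x + y * cnj y = of_real \<tau>"
    unfolding \<tau>_def by (simp only: of_real_add complex_norm_square)
  have "complex_of_real ((cmod A)\<^sup>2 + (cmod B)\<^sup>2) = A * cnj A + B * cnj B"
    by (simp only: of_real_add complex_norm_square)
  also have "\<dots> = (\<beta> * cnj \<beta> + \<gamma> * cnj \<gamma>) * (x * cnj x + y * cnj y)"
    by (simp add: A_def B_def algebra_simps)
  also have "\<dots> = complex_of_real (s\<^sup>2 * \<tau>)"
    by (simp only: T s_def real_sqrt_pow2[OF add_nonneg_nonneg[OF zero_le_power2 zero_le_power2]]
        of_real_mult of_real_add complex_norm_square)
  finally have AB: "(cmod A)\<^sup>2 + (cmod B)\<^sup>2 = s\<^sup>2 * \<tau>"
    by (simp only: of_real_eq_iff)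
  have "v - \<beta> = x * A - \<beta> * (x * cnj x + y * cnj y) - of_real (1 - \<tau>) * \<beta>"
    by (simp add: v_def A_def T algebra_simps)
  also have "\<dots> = cnj y * B - of_real (1 - \<tau>) * \<beta>"
    by (simp add: A_def B_def algebra_simps)
  finally have "cmod (v - \<beta>) \<le> cmod y * cmod B + (1 - \<tau>) * cmod \<beta>"
    using norm_triangle_ineq4[of "cnj y * B" "of_real (1 - \<tau>) * \<beta>"] \<tau>
    by (simp add: norm_mult del: of_real_diff)
  moreover have "cmod x * cmod A + cmod y * cmod B \<le> sqrt \<tau> * sqrt (s\<^sup>2 * \<tau>)"
    using norm_cauchy_schwarz[of "Complex (cmod x) (cmod y)" "Complex (cmod A) (cmod B)"] AB
    by (simp add: inner_complex_def complex_norm \<tau>_def)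
  moreover have "sqrt \<tau> * sqrt (s\<^sup>2 * \<tau>) = \<tau> * s"
    using \<tau> s by (simp add: real_sqrt_mult mult.commute mult.left_commute)
  moreover have "cmod v = cmod x * cmod A"
    by (simp add: v_def A_def norm_mult)
  ultimately have "cmod v + cmod (v - \<beta>) \<le> \<tau> * s + (1 - \<tau>) * cmod \<beta>"
    by linarith
  also have "\<dots> \<le> s"
    using \<tau> s mult_left_mono[of "cmod \<beta>" s "1 - \<tau>"] by (simp add: algebra_simps)
  finally show ?thesis
    by (simp add: s_def)
qed

lemma ellipse_weight_identity:
  fixes a b c e g p s d1 d2 :: real
  assumes ps: "p * s = d1" and d1: "d1 * d1 = a * a + b * b"
    and d2: "d2 * d2 = (a - c) * (a - c) + (b - e) * (b - e)"
    and s: "s * s = c * c + e * e + g"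
  shows "(a - p * c) * (a - p * c) + (b - p * e) * (b - p * e) - g * (p * (1 - p)) =
         p * (d2 * d2 - (s - d1) * (s - d1))"
proof -
  have pps: "p * p * (s * s) = a * a + b * b"
    using ps d1 by (metis mult.assoc mult.left_commute)
  have psd: "p * s * d1 = a * a + b * b"
    using ps d1 by simp
  have "p * (d2 * d2 - (s - d1) * (s - d1)) = p * (d2 * d2) - p * (s * s) + 2 * (p * s * d1) - p * (d1 * d1)"
    by (simp add: algebra_simps)
  also have "\<dots> = - 2 * p * (a * c + b * e) - p * g + 2 * (a * a + b * b)"
    unfolding d2 s psd d1 by (simp add: algebra_simps)
  also have "\<dots> = (a * a + b * b) - 2 * p * (a * c + b * e) + p * p * (s * s) - g * p"
    by (simp add: pps)
  also have "\<dots> = (a - p * c) * (a - p * c) + (b - p * e) * (b - p * e) - g * (p * (1 - p))"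
    unfolding s by (simp add: algebra_simps)
  finally show ?thesis ..
qed

text \<open>The weight \<open>q = |x|\<^sup>2\<close> of a preimage of \<open>v\<close> under the quadratic map: \<open>h q = 0\<close>
  for \<open>h p = |v - p \<beta>|\<^sup>2 - |\<gamma>|\<^sup>2 p (1 - p)\<close>, which is \<open>\<ge> 0\<close> at \<open>0\<close> and \<open>\<le> 0\<close> at \<open>|v| / s\<close>.\<close>
lemma ellipse_point_weight:
  fixes v \<beta> \<gamma> :: complex
  defines "s \<equiv> sqrt ((cmod \<beta>)\<^sup>2 + (cmod \<gamma>)\<^sup>2)"
  assumes le: "cmod v + cmod (v - \<beta>) \<le> s" and s_pos: "s > 0"
  obtains q where "0 \<le> q" "q \<le> 1" "(cmod (v - of_real q * \<beta>))\<^sup>2 = (cmod \<gamma>)\<^sup>2 * (q * (1 - q))"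
proof -
  define d1 where "d1 = cmod v"
  define d2 where "d2 = cmod (v - \<beta>)"
  define g where "g = (cmod \<gamma>)\<^sup>2"
  define h where "h p = (cmod (v - of_real p * \<beta>))\<^sup>2 - g * (p * (1 - p))" for p :: real
  define p1 where "p1 = d1 / s"
  have d1_le: "d1 \<le> s" and d2_le: "d2 \<le> s - d1"
    using le norm_ge_zero[of "v - \<beta>"] unfolding d1_def d2_def by linarith+
  have p1: "0 \<le> p1" "p1 \<le> 1"
    using d1_le s_pos by (auto simp: p1_def d1_def)
  have "h p1 = (Re v - p1 * Re \<beta>) * (Re v - p1 * Re \<beta>) + (Im v - p1 * Im \<beta>) * (Im v - p1 * Im \<beta>)
      - g * (p1 * (1 - p1))"
    unfolding h_def cmod_power2 by (simp add: power2_eq_square)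
  also have "\<dots> = p1 * (d2 * d2 - (s - d1) * (s - d1))"
    using s_pos
    by (intro ellipse_weight_identity)
       (simp_all add: p1_def d1_def d2_def s_def g_def cmod_def flip: power2_eq_square)
  also have "\<dots> \<le> 0"
    using d2_le d1_le p1 by (intro mult_nonneg_nonpos) (auto simp: d2_def intro!: mult_mono)
  finally have "h p1 \<le> 0" .
  moreover have "h 0 \<ge> 0"
    by (simp add: h_def)
  moreover have "continuous_on {0..p1} h"
    unfolding h_def by (intro continuous_intros)
  ultimately obtain q where "0 \<le> q" "q \<le> p1" "h q = 0"
    using IVT2'[of h p1 0 0] p1 by blast
  then show ?thesis
    using that[of q] p1 by (simp add: h_def g_def)
qed

lemma unimodular_factor:
  fixes a b :: complex
  assumes "cmod a = cmod b"
  obtains \<zeta> where "cmod \<zeta> = 1" "a * cnj \<zeta> = b"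
proof (cases "a = 0")
  case True
  then show ?thesis
    using assms that[of 1] by simp
next
  case False
  with assms have "b \<noteq> 0"
    by auto
  with False show ?thesis
    using assms that[of "cnj (b / a)"] by (simp add: norm_divide)
qed

lemma ellipse_in_quadratic_image:
  fixes v \<beta> \<gamma> :: complex
  assumes le: "cmod v + cmod (v - \<beta>) \<le> sqrt ((cmod \<beta>)\<^sup>2 + (cmod \<gamma>)\<^sup>2)"
  obtains x y where "(cmod x)\<^sup>2 + (cmod y)\<^sup>2 = 1" "v = x * (\<beta> * cnj x + \<gamma> * cnj y)"
proof (cases "sqrt ((cmod \<beta>)\<^sup>2 + (cmod \<gamma>)\<^sup>2) = 0")
  case True
  then have "\<beta> = 0" "\<gamma> = 0" "v = 0"
    using le by (auto simp: add_nonneg_eq_0_iff)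
  then show ?thesis
    using that[of 1 0] by simp
next
  case False
  moreover have "sqrt ((cmod \<beta>)\<^sup>2 + (cmod \<gamma>)\<^sup>2) \<ge> 0"
    by simp
  ultimately have "sqrt ((cmod \<beta>)\<^sup>2 + (cmod \<gamma>)\<^sup>2) > 0"
    by linarith
  then obtain q where q: "0 \<le> q" "q \<le> 1"
    and hq: "(cmod (v - of_real q * \<beta>))\<^sup>2 = (cmod \<gamma>)\<^sup>2 * (q * (1 - q))"
    using ellipse_point_weight[OF le] by blast
  define t where "t = sqrt q * sqrt (1 - q)"
  have t: "t \<ge> 0" "t * t = q * (1 - q)"
    using q by (simp_all add: t_def real_sqrt_mult[symmetric])
  have "(cmod (v - of_real q * \<beta>))\<^sup>2 = (cmod \<gamma> * t)\<^sup>2"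
    using hq t(2) by (simp add: power_mult_distrib power2_eq_square[of t])
  then have v_q: "cmod (v - of_real q * \<beta>) = cmod \<gamma> * t"
    using t(1) by (simp add: power2_eq_iff_nonneg)
  define x where "x = complex_of_real (sqrt q)"
  have xx: "x * cnj x = of_real q" and x2: "(cmod x)\<^sup>2 = q"
    using q by (simp_all add: x_def flip: of_real_mult)
  have "cmod (\<gamma> * of_real t) = cmod (v - of_real q * \<beta>)"
    using v_q t by (simp add: norm_mult)
  then obtain \<zeta> where \<zeta>: "cmod \<zeta> = 1" "\<gamma> * of_real t * cnj \<zeta> = v - of_real q * \<beta>"
    by (rule unimodular_factor)
  define y where "y = complex_of_real (sqrt (1 - q)) * \<zeta>"
  have "x * (\<beta> * cnj x + \<gamma> * cnj y) = (x * cnj x) * \<beta> + \<gamma> * of_real t * cnj \<zeta>"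
    by (simp add: x_def y_def t_def algebra_simps)
  also have "\<dots> = v"
    by (simp add: xx \<zeta>)
  finally show ?thesis
    using that[of x y] q \<zeta> by (simp add: x2 y_def norm_mult)
qed

lemma ellipse_degenerate_segment: "{v. cmod v + cmod (v - a) \<le> cmod a} = closed_segment 0 a"
proof (intro set_eqI iffI)
  fix v
  assume "v \<in> {v. cmod v + cmod (v - a) \<le> cmod a}"
  moreover have "cmod a \<le> cmod v + cmod (v - a)"
    using norm_triangle_ineq4[of v "v - a"] by simp
  ultimately have "dist 0 a = dist 0 v + dist v a"
    by (simp add: dist_norm norm_minus_commute)
  then show "v \<in> closed_segment 0 a"
    by (simp add: between_mem_segment[symmetric] between)
next
  fix v
  assume "v \<in> closed_segment 0 a"
  then have "dist 0 a = dist 0 v + dist v a"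
    by (simp add: between_mem_segment[symmetric] between)
  then show "v \<in> {v. cmod v + cmod (v - a) \<le> cmod a}"
    by (simp add: dist_norm norm_minus_commute)
qed

section \<open>Numerical ranges of rank-one operators\<close>

text \<open>\<open>lc a x b y\<close> stands for \<open>a x + b y\<close>. The form need not be definite: as for square
  integrable functions compared only on a disc, a vector of norm \<open>0\<close> need not be the zero vector.\<close>
locale semi_inner_product_space =
  fixes H :: "'v set" and lc :: "complex \<Rightarrow> 'v \<Rightarrow> complex \<Rightarrow> 'v \<Rightarrow> 'v"
    and ip :: "'v \<Rightarrow> 'v \<Rightarrow> complex"
  assumes lc_closed: "x \<in> H \<Longrightarrow> y \<in> H \<Longrightarrow> lc a x b y \<in> H"
    and ip_lc_left: "x \<in> H \<Longrightarrow> y \<in> H \<Longrightarrow> z \<in> H \<Longrightarrow> ip (lc a x b y) z = a * ip x z + b * ip y z"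
    and ip_conj_sym: "x \<in> H \<Longrightarrow> y \<in> H \<Longrightarrow> ip y x = cnj (ip x y)"
    and ip_self_nonneg: "x \<in> H \<Longrightarrow> Im (ip x x) = 0 \<and> Re (ip x x) \<ge> 0"
begin

definition nrm :: "'v \<Rightarrow> real" where
  "nrm x = sqrt (Re (ip x x))"

lemma ip_lc_right:
  assumes x: "x \<in> H" and y: "y \<in> H" and z: "z \<in> H"
  shows "ip z (lc a x b y) = cnj a * ip z x + cnj b * ip z y"
proof -
  have "ip z (lc a x b y) = cnj (ip (lc a x b y) z)"
    by (rule ip_conj_sym[OF lc_closed[OF x y] z])
  also have "\<dots> = cnj a * cnj (ip x z) + cnj b * cnj (ip y z)"
    using x y z by (simp add: ip_lc_left)
  finally show ?thesis
    using ip_conj_sym[OF z x] ip_conj_sym[OF z y] by simp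
qed

lemma ip_self:
  assumes "x \<in> H"
  shows "ip x x = of_real ((nrm x)\<^sup>2)"
proof -
  have "Im (ip x x) = 0" and "(nrm x)\<^sup>2 = Re (ip x x)"
    using ip_self_nonneg[OF assms] by (simp_all add: nrm_def)
  then show ?thesis
    by (simp add: complex_eq_iff)
qed

lemma nrm_nonneg: "x \<in> H \<Longrightarrow> nrm x \<ge> 0"
  using ip_self_nonneg[of x] by (simp add: nrm_def)

text \<open>If \<open>ip r f \<noteq> 0\<close> for a null vector \<open>r\<close>, then \<open>r - \<epsilon> (ip r f) f\<close> has negative square norm
  for small \<open>\<epsilon> > 0\<close>.\<close>
lemma ip_null_left:
  assumes r: "r \<in> H" and f: "f \<in> H" and r0: "nrm r = 0"
  shows "ip r f = 0"
proof (rule ccontr)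
  define X where "X = ip r f"
  assume "ip r f \<noteq> 0"
  then have X_pos: "(cmod X)\<^sup>2 > 0"
    by (simp add: X_def)
  define \<epsilon> where "\<epsilon> = 1 / ((nrm f)\<^sup>2 + 1)"
  have "(nrm f)\<^sup>2 + 1 > 0"
    by (metis add_nonneg_pos zero_le_power2 zero_less_one)
  then have \<epsilon>: "\<epsilon> > 0" "\<epsilon> * (nrm f)\<^sup>2 < 1"
    by (simp_all add: \<epsilon>_def)
  define t where "t = - (of_real \<epsilon> * X)"
  define g where "g = lc 1 r t f"
  have g: "g \<in> H"
    using r f by (simp add: g_def lc_closed)
  have rr: "ip r r = 0"
    using ip_self[OF r] r0 by simp
  have fr: "ip f r = cnj X"
    using ip_conj_sym[OF r f] by (simp add: X_def)
  have "ip g g = ip r g + t * ip f g"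
    using r f g unfolding g_def by (simp add: ip_lc_left)
  also have "\<dots> = cnj t * X + t * (cnj X + cnj t * of_real ((nrm f)\<^sup>2))"
    using r f unfolding g_def by (simp add: ip_lc_right rr fr ip_self[OF f] X_def)
  also have "\<dots> = of_real \<epsilon> * (X * cnj X) * (of_real \<epsilon> * of_real ((nrm f)\<^sup>2) - 2)"
    by (simp add: t_def algebra_simps)
  also have "\<dots> = of_real (\<epsilon> * (cmod X)\<^sup>2 * (\<epsilon> * (nrm f)\<^sup>2 - 2))"
    by (simp only: of_real_mult of_real_diff of_real_numeral complex_norm_square)
  finally have "Re (ip g g) = \<epsilon> * (cmod X)\<^sup>2 * (\<epsilon> * (nrm f)\<^sup>2 - 2)"
    by simp
  also have "\<dots> < 0"
    using \<epsilon> X_pos by (simp add: mult_pos_neg)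
  finally show False
    using ip_self_nonneg[OF g] by simp
qed

lemma unit_vector_exists:
  assumes r: "r \<in> H" and r_pos: "nrm r > 0"
  obtains q where "q \<in> H" "ip q q = 1" "\<And>f. f \<in> H \<Longrightarrow> ip r f = of_real (nrm r) * ip q f"
proof
  define q where "q = lc (of_real (1 / nrm r)) r 0 r"
  show q: "q \<in> H"
    using r by (simp add: q_def lc_closed)
  have q_f: "ip q f = of_real (1 / nrm r) * ip r f" if "f \<in> H" for f
    using r that by (simp add: q_def ip_lc_left)
  show "ip r f = of_real (nrm r) * ip q f" if "f \<in> H" for f
    using q_f[OF that] r_pos by simp
  show "ip q q = 1"
    using q_f[OF q] r_pos r by (simp add: q_def ip_lc_right ip_self power2_eq_square)
qed

lemma bessel_inequality_2:
  assumes f: "f \<in> H" and e: "e \<in> H" and q: "q \<in> H"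
    and ee: "ip e e = 1" and qq: "ip q q = 1" and eq: "ip e q = 0"
  shows "(cmod (ip f e))\<^sup>2 + (cmod (ip f q))\<^sup>2 \<le> (nrm f)\<^sup>2"
proof -
  define x where "x = ip f e"
  define y where "y = ip f q"
  define P where "P = lc x e y q"
  have P: "P \<in> H" and h: "lc 1 f (-1) P \<in> H"
    using e q f by (simp_all add: P_def lc_closed)
  have qe: "ip q e = 0"
    using ip_conj_sym[OF e q] eq by simp
  have ef: "ip e f = cnj x" and qf: "ip q f = cnj y"
    using ip_conj_sym[OF f e] ip_conj_sym[OF f q] by (simp_all add: x_def y_def)
  have Pf: "ip P f = x * cnj x + y * cnj y" and fP: "ip f P = x * cnj x + y * cnj y"
    using e q f by (simp_all add: P_def ip_lc_left ip_lc_right ef qf x_def y_def)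
  have PP: "ip P P = x * cnj x + y * cnj y"
    using e q by (simp add: P_def ip_lc_left ip_lc_right lc_closed ee qq eq qe)
  have "ip (lc 1 f (-1) P) (lc 1 f (-1) P) = ip f f - (x * cnj x + y * cnj y)"
    using f P by (simp add: ip_lc_left ip_lc_right lc_closed Pf fP PP)
  also have "\<dots> = of_real ((nrm f)\<^sup>2 - ((cmod x)\<^sup>2 + (cmod y)\<^sup>2))"
    using f by (simp add: ip_self flip: complex_norm_square)
  finally show ?thesis
    using ip_self_nonneg[OF h] by (simp add: x_def y_def)
qed

lemma orthonormal_pair_lc:
  assumes e: "e \<in> H" and q: "q \<in> H"
    and ee: "ip e e = 1" and qq: "ip q q = 1" and eq: "ip e q = 0"
    and xy: "(cmod x)\<^sup>2 + (cmod y)\<^sup>2 = 1"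
  shows "lc x e y q \<in> H" "nrm (lc x e y q) = 1" "ip (lc x e y q) e = x" "ip (lc x e y q) q = y"
proof -
  have qe: "ip q e = 0"
    using ip_conj_sym[OF e q] eq by simp
  show f: "lc x e y q \<in> H"
    using e q by (rule lc_closed)
  show fe: "ip (lc x e y q) e = x" and fq: "ip (lc x e y q) q = y"
    using e q by (simp_all add: ip_lc_left ee qq eq qe)
  have "ip (lc x e y q) (lc x e y q) = x * cnj x + y * cnj y"
    using e q f by (simp add: ip_lc_right fe fq)
  also have "\<dots> = of_real ((cmod x)\<^sup>2 + (cmod y)\<^sup>2)"
    by (simp only: of_real_add complex_norm_square)
  also have "\<dots> = 1"
    using xy by simp
  finally show "nrm (lc x e y q) = 1"
    by (simp add: nrm_def)
qed

lemma orthogonal_projection: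
  assumes k: "k \<in> H" and p: "p \<in> H" and k_pos: "nrm k > 0"
  defines "c \<equiv> ip p k / ip k k"
  shows "lc 1 p (- c) k \<in> H" and "ip (lc 1 p (- c) k) k = 0"
    and "ip p k = c * of_real ((nrm k)\<^sup>2)"
    and "(nrm p)\<^sup>2 = (nrm (lc 1 p (- c) k))\<^sup>2 + (cmod c)\<^sup>2 * (nrm k)\<^sup>2"
proof -
  define r where "r = lc 1 p (- c) k"
  have kk: "ip k k = of_real ((nrm k)\<^sup>2)" and kk0: "ip k k \<noteq> 0"
    using ip_self[OF k] k_pos by simp_all
  show r: "lc 1 p (- c) k \<in> H"
    using p k by (rule lc_closed)
  show rk: "ip (lc 1 p (- c) k) k = 0"
    using p k kk0 by (simp add: ip_lc_left c_def)
  show pk: "ip p k = c * of_real ((nrm k)\<^sup>2)"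
    using kk0 by (simp add: c_def kk)
  have "ip r r = ip r p - cnj c * ip r k"
    using ip_lc_right[OF p k r, of 1 "- c", folded r_def] by simp
  then have rp: "ip r p = ip r r"
    using rk by (simp add: r_def)
  have "ip p p = ip r p + c * ip k p"
    using p k by (simp add: r_def ip_lc_left)
  also have "\<dots> = ip r r + c * cnj c * ip k k"
    using p k by (simp add: rp ip_conj_sym[of p k] pk kk)
  finally have "of_real ((nrm p)\<^sup>2) = complex_of_real ((nrm r)\<^sup>2 + (cmod c)\<^sup>2 * (nrm k)\<^sup>2)"
    using p r by (simp add: ip_self kk r_def flip: complex_norm_square)
  then show "(nrm p)\<^sup>2 = (nrm (lc 1 p (- c) k))\<^sup>2 + (cmod c)\<^sup>2 * (nrm k)\<^sup>2"
    by (simp only: of_real_eq_iff r_def)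
qed

lemma cauchy_schwarz_strict:
  assumes k: "k \<in> H" and p: "p \<in> H" and k_pos: "nrm k > 0"
    and not_parallel: "nrm (lc 1 p (- (ip p k / ip k k)) k) > 0"
  shows "cmod (ip p k) < nrm p * nrm k"
proof -
  define c where "c = ip p k / ip k k"
  define r where "r = lc 1 p (- c) k"
  note proj = orthogonal_projection[OF k p k_pos, folded c_def, folded r_def]
  have "(cmod (ip p k))\<^sup>2 = (cmod c)\<^sup>2 * (nrm k)\<^sup>2 * (nrm k)\<^sup>2"
    unfolding proj(3) by (simp add: norm_mult norm_power power_mult_distrib)
  also have "\<dots> < (nrm p)\<^sup>2 * (nrm k)\<^sup>2"
  proof -
    have "0 < (nrm r)\<^sup>2 * (nrm k)\<^sup>2"
      using not_parallel k_pos by (simp add: r_def c_def)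
    then show ?thesis
      unfolding proj(4) by (simp add: distrib_right)
  qed
  also have "\<dots> = (nrm p * nrm k)\<^sup>2"
    by (simp add: power_mult_distrib)
  finally show ?thesis
    by (rule power_less_imp_less_base) (simp add: nrm_nonneg p k)
qed

lemma rank_one_numerical_range_decomposed:
  assumes k: "k \<in> H" and p: "p \<in> H" and k_pos: "nrm k > 0"
    and q: "q \<in> H" and qq: "ip q q = 1" and qk: "ip q k = 0"
    and p_decomp: "\<And>f. f \<in> H \<Longrightarrow> ip p f = \<beta> * ip k f + \<gamma> * ip q f"
    and p_nrm: "(nrm p)\<^sup>2 = (cmod \<beta>)\<^sup>2 * (nrm k)\<^sup>2 + (cmod \<gamma>)\<^sup>2"
  shows "{ip f k * ip p f | f. f \<in> H \<and> nrm f = 1} = {v. cmod v + cmod (v - ip p k) \<le> nrm p * nrm k}"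
proof -
  define K where "K = nrm k"
  obtain e where e: "e \<in> H" "ip e e = 1" and k_e: "\<And>f. f \<in> H \<Longrightarrow> ip k f = of_real K * ip e f"
    using unit_vector_exists[OF k k_pos] unfolding K_def by blast
  have K_pos: "K > 0"
    using k_pos by (simp add: K_def)
  have f_k: "ip f k = of_real K * ip f e" if "f \<in> H" for f
    using k_e[OF that] ip_conj_sym[OF k that] ip_conj_sym[OF that e(1)] by simp
  have eq: "ip e q = 0"
    using f_k[OF q] qk K_pos ip_conj_sym[OF e(1) q] by simp
  define B where "B = \<beta> * of_real K"
  define s where "s = sqrt ((cmod B)\<^sup>2 + (cmod \<gamma>)\<^sup>2)"
  have product: "ip f k * ip p f = of_real K * (ip f e * (B * cnj (ip f e) + \<gamma> * cnj (ip f q)))"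
    if f: "f \<in> H" for f
    using p_decomp[OF f] f_k[OF f] k_e[OF f] ip_conj_sym[OF f e(1)] ip_conj_sym[OF f q]
    by (simp add: B_def algebra_simps)
  have pk: "ip p k = of_real K * B"
    using p_decomp[OF k] qk k_e[OF k] f_k[OF e(1)] e(2) by (simp add: B_def algebra_simps)
  have "s = nrm p"
    unfolding s_def B_def using p_nrm nrm_nonneg[OF p]
    by (intro real_sqrt_unique) (simp_all add: norm_mult power_mult_distrib K_def)
  then have ps: "nrm p * nrm k = K * s"
    by (simp add: K_def)
  have scale: "cmod (of_real K * v) + cmod (of_real K * v - of_real K * B) \<le> K * s \<longleftrightarrow>
      cmod v + cmod (v - B) \<le> s" for v
    using K_pos by (simp add: norm_mult flip: right_diff_distrib distrib_left)
  show ?thesis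
  proof (intro set_eqI iffI)
    fix v assume "v \<in> {ip f k * ip p f | f. f \<in> H \<and> nrm f = 1}"
    then obtain f where f: "f \<in> H" "nrm f = 1" and v: "v = ip f k * ip p f"
      by blast
    have "(cmod (ip f e))\<^sup>2 + (cmod (ip f q))\<^sup>2 \<le> 1"
      using bessel_inequality_2[OF f(1) e(1) q e(2) qq eq] f(2) by simp
    from quadratic_map_in_ellipse[OF this, of B \<gamma>]
    show "v \<in> {v. cmod v + cmod (v - ip p k) \<le> nrm p * nrm k}"
      using scale by (simp add: v product[OF f(1)] pk ps s_def)
  next
    fix v assume "v \<in> {v. cmod v + cmod (v - ip p k) \<le> nrm p * nrm k}"
    then have "cmod (v / of_real K) + cmod (v / of_real K - B) \<le> s"
      using scale[of "v / of_real K"] K_pos by (simp add: pk ps)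
    then obtain x y where xy: "(cmod x)\<^sup>2 + (cmod y)\<^sup>2 = 1"
      and v: "v / of_real K = x * (B * cnj x + \<gamma> * cnj y)"
      using ellipse_in_quadratic_image unfolding s_def by blast
    note f = orthonormal_pair_lc[OF e(1) q e(2) qq eq xy]
    have "v = ip (lc x e y q) k * ip p (lc x e y q)"
      unfolding product[OF f(1)] f(3,4) using K_pos v by (simp add: field_simps)
    then show "v \<in> {ip f k * ip p f | f. f \<in> H \<and> nrm f = 1}"
      using f(1,2) by blast
  qed
qed

text \<open>\<open>ip f k * ip p f = ip (T f) f\<close> for the rank-one operator \<open>T f = ip f k \<cdot> p\<close>. The unit vector
  \<open>q\<close> orthogonal to \<open>k\<close> is needed only when \<open>p\<close> is parallel to \<open>k\<close>.\<close>
theorem rank_one_numerical_range: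
  assumes k: "k \<in> H" and p: "p \<in> H" and k_pos: "nrm k > 0"
    and q: "q \<in> H" and qq: "ip q q = 1" and qk: "ip q k = 0"
  shows "{ip f k * ip p f | f. f \<in> H \<and> nrm f = 1} = {v. cmod v + cmod (v - ip p k) \<le> nrm p * nrm k}"
proof -
  define c where "c = ip p k / ip k k"
  define r where "r = lc 1 p (- c) k"
  note proj = orthogonal_projection[OF k p k_pos, folded c_def, folded r_def]
  have p_r: "ip p f = c * ip k f + ip r f" if "f \<in> H" for f
    using p k that by (simp add: r_def ip_lc_left)
  obtain q' \<gamma> where q': "q' \<in> H" "ip q' q' = 1" "ip q' k = 0"
    and p_decomp: "\<And>f. f \<in> H \<Longrightarrow> ip p f = c * ip k f + \<gamma> * ip q' f"
    and \<gamma>: "(cmod \<gamma>)\<^sup>2 = (nrm r)\<^sup>2"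
  proof (cases "nrm r > 0")
    case True
    then obtain q' where q': "q' \<in> H" "ip q' q' = 1"
      and r_f: "\<And>f. f \<in> H \<Longrightarrow> ip r f = of_real (nrm r) * ip q' f"
      using unit_vector_exists[OF proj(1)] by blast
    have "ip q' k = 0"
      using proj(2) r_f[OF k] True by simp
    moreover have "ip p f = c * ip k f + of_real (nrm r) * ip q' f" if "f \<in> H" for f
      using p_r[OF that] r_f[OF that] by simp
    moreover have "(cmod (complex_of_real (nrm r)))\<^sup>2 = (nrm r)\<^sup>2"
      by simp
    ultimately show ?thesis
      by (rule that[OF q'])
  next
    case False
    then have r0: "nrm r = 0"
      using nrm_nonneg[OF proj(1)] by simp
    have "ip p f = c * ip k f + 0 * ip q f" if "f \<in> H" for f
      using p_r[OF that] ip_null_left[OF proj(1) that r0] by simp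
    moreover have "(cmod (0::complex))\<^sup>2 = (nrm r)\<^sup>2"
      using r0 by simp
    ultimately show ?thesis
      by (rule that[OF q qq qk])
  qed
  have "(nrm p)\<^sup>2 = (cmod c)\<^sup>2 * (nrm k)\<^sup>2 + (cmod \<gamma>)\<^sup>2"
    using proj(4) \<gamma> by simp
  from rank_one_numerical_range_decomposed[OF k p k_pos q' p_decomp this] show ?thesis .
qed

end

section \<open>Integration on the complex plane\<close>

definition vec_of_complex :: "complex \<Rightarrow> real^2" where
  "vec_of_complex z = (\<chi> i. if i = 1 then Re z else Im z)"

definition complex_of_vec :: "real^2 \<Rightarrow> complex" where
  "complex_of_vec v = Complex (v$1) (v$2)"

lemma vec_of_complex_nth [simp]: "vec_of_complex z $ 1 = Re z" "vec_of_complex z $ 2 = Im z"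
  by (auto simp: vec_of_complex_def)

lemma complex_of_vec_inverse [simp]: "complex_of_vec (vec_of_complex z) = z"
  by (simp add: complex_of_vec_def complex_eq_iff)

lemma linear_vec_of_complex: "linear vec_of_complex"
  by (rule linearI) (auto simp: vec_eq_iff forall_2)

lemma linear_complex_of_vec: "linear complex_of_vec"
  by (rule linearI) (auto simp: complex_of_vec_def complex_eq_iff)

lemma borel_measurable_linear:
  fixes f :: "'a::euclidean_space \<Rightarrow> 'b::euclidean_space"
  shows "linear f \<Longrightarrow> f \<in> borel_measurable borel"
  by (intro borel_measurable_continuous_onI linear_continuous_on) (simp add: linear_conv_bounded_linear)

lemma borel_measurable_vec_of_complex [measurable]: "vec_of_complex \<in> borel_measurable borel"
  by (rule borel_measurable_linear[OF linear_vec_of_complex])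

lemma borel_measurable_complex_of_vec [measurable]: "complex_of_vec \<in> borel_measurable borel"
  by (rule borel_measurable_linear[OF linear_complex_of_vec])

lemma lborel_vec2_eq_distr: "(lborel :: (real^2) measure) = distr lborel borel vec_of_complex"
proof (rule lborel_eqI)
  fix l u :: "real^2"
  assume le: "\<And>b. b \<in> Basis \<Longrightarrow> l \<bullet> b \<le> u \<bullet> b"
  have Basis: "(Basis :: (real^2) set) = {axis 1 1, axis 2 1}"
    by (auto simp: Basis_vec_def UNIV_2)
  have axis_neq: "axis 1 (1::real) \<noteq> (axis 2 1 :: real^2)"
    by (auto simp: axis_def vec_eq_iff)
  have "l$1 \<le> u$1" "l$2 \<le> u$2"
    using le[of "axis 1 1"] le[of "axis 2 1"] by (auto simp: Basis inner_axis)
  moreover have "vec_of_complex -` box l u = box (Complex (l$1) (l$2)) (Complex (u$1) (u$2))"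
    by (auto simp: mem_box_cart mem_box Basis_complex_def forall_2)
  ultimately have "emeasure (distr lborel borel vec_of_complex) (box l u) = ennreal ((u$1 - l$1) * (u$2 - l$2))"
    by (simp add: emeasure_distr) (subst emeasure_lborel_box; auto simp: Basis_complex_def)
  also have "\<dots> = (\<Prod>b\<in>Basis. (u - l) \<bullet> b)"
    by (simp add: Basis axis_neq inner_axis)
  finally show "emeasure (distr lborel borel vec_of_complex) (box l u) = (\<Prod>b\<in>Basis. (u - l) \<bullet> b)" .
qed simp

lemma lborel_complex_eq_distr: "(lborel :: complex measure) = distr lborel borel complex_of_vec"
proof -
  have "distr (lborel :: (real^2) measure) borel complex_of_vec =
      distr lborel borel (complex_of_vec \<circ> vec_of_complex)"
    by (subst lborel_vec2_eq_distr) (simp add: distr_distr)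
  also have "complex_of_vec \<circ> vec_of_complex = id"
    by (auto simp: fun_eq_iff)
  finally show ?thesis
    by (simp add: distr_id2)
qed

lemma distr_lborel_orthogonal_transformation:
  fixes f :: "real^'n::{finite,wellorder} \<Rightarrow> real^'n::_"
  assumes f: "orthogonal_transformation f"
  shows "distr lborel borel f = lborel"
proof (rule lborel_eqI[symmetric])
  have f_meas [measurable]: "f \<in> borel_measurable borel"
    by (rule borel_measurable_linear[OF orthogonal_transformation_linear[OF f]])
  show "emeasure (distr lborel borel f) (box l u) = (\<Prod>b\<in>Basis. (u - l) \<bullet> b)"
    if le: "\<And>b. b \<in> Basis \<Longrightarrow> l \<bullet> b \<le> u \<bullet> b" for l u
  proof -
    have pre: "f -` box l u = inv f ` box l u"
      by (rule bij_vimage_eq_inv_image[OF orthogonal_transformation_bij[OF f]])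
    have lmeas: "inv f ` box l u \<in> lmeasurable"
      by (rule measurable_orthogonal_image[OF orthogonal_transformation_inv[OF f]]) simp
    have borel: "inv f ` box l u \<in> sets borel"
      unfolding pre[symmetric] using f_meas by (rule measurable_sets_borel) simp
    have "emeasure (distr lborel borel f) (box l u) = emeasure lborel (inv f ` box l u)"
      by (simp add: emeasure_distr pre)
    also have "\<dots> = ennreal (measure lebesgue (inv f ` box l u))"
      using lmeas borel
      by (simp add: emeasure_eq_ennreal_measure fmeasurable_def measure_completion emeasure_completion)
    also have "\<dots> = ennreal (measure lborel (box l u))"
      by (simp add: measure_orthogonal_image[OF orthogonal_transformation_inv[OF f]] measure_completion)
    also have "\<dots> = (\<Prod>b\<in>Basis. (u - l) \<bullet> b)"
      using le by (simp add: measure_lborel_box_eq)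
    finally show ?thesis .
  qed
qed simp

lemma orthogonal_transformation_rotation:
  assumes "cmod u = 1"
  shows "orthogonal_transformation (\<lambda>v. vec_of_complex (u * complex_of_vec v))"
proof -
  have u: "(Re u)\<^sup>2 + (Im u)\<^sup>2 = 1"
    using assms by (simp add: cmod_def)
  have "vec_of_complex (u * complex_of_vec v) \<bullet> vec_of_complex (u * complex_of_vec w) =
      ((Re u)\<^sup>2 + (Im u)\<^sup>2) * (v \<bullet> w)" for v w
    by (simp add: inner_vec_def sum_2 complex_of_vec_def algebra_simps power2_eq_square)
  moreover have "linear (\<lambda>v. vec_of_complex (u * complex_of_vec v))"
    by (rule linearI) (auto simp: vec_eq_iff forall_2 complex_of_vec_def algebra_simps)
  ultimately show ?thesis
    using u by (simp add: orthogonal_transformation_def)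
qed

lemma distr_lborel_complex_rotation:
  assumes "cmod u = 1"
  shows "distr (lborel :: complex measure) borel (\<lambda>z. u * z) = lborel"
proof -
  have "distr (lborel :: complex measure) borel (\<lambda>z. u * z) =
      distr (distr lborel borel (\<lambda>v. vec_of_complex (u * complex_of_vec v))) borel complex_of_vec"
    by (subst lborel_complex_eq_distr) (simp add: distr_distr o_def)
  also have "\<dots> = lborel"
    by (simp add: distr_lborel_orthogonal_transformation[OF orthogonal_transformation_rotation[OF assms]]
        flip: lborel_complex_eq_distr)
  finally show ?thesis .
qed

lemma lborel_integral_rotation:
  fixes F :: "complex \<Rightarrow> 'b::{banach, second_countable_topology}"
  assumes u: "cmod u = 1" and [measurable]: "F \<in> borel_measurable borel"
  shows "(\<integral>z. F (u * z) \<partial>lborel) = (\<integral>z. F z \<partial>lborel)"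
proof -
  have "(\<integral>z. F z \<partial>lborel) = (\<integral>z. F z \<partial>distr lborel borel (\<lambda>z. u * z))"
    by (simp add: distr_lborel_complex_rotation[OF u])
  also have "\<dots> = (\<integral>z. F (u * z) \<partial>lborel)"
    by (subst integral_distr) auto
  finally show ?thesis ..
qed

lemma borel_measurable_cnj [measurable]:
  "f \<in> borel_measurable M \<Longrightarrow> (\<lambda>x. cnj (f x :: complex)) \<in> borel_measurable M"
  using measurable_compose[of f M borel cnj borel]
  by (simp add: borel_measurable_continuous_onI continuous_on_cnj continuous_on_id)

text \<open>For \<open>n \<noteq> m\<close> the rotation by \<open>u\<close> with \<open>u^(n - m) = -1\<close> changes the sign of the integrand.\<close>
lemma lborel_integral_radial_monomial_orthogonal:
  fixes G :: "real \<Rightarrow> real"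
  assumes [measurable]: "G \<in> borel_measurable borel" and "n \<noteq> m"
  shows "(\<integral>z. G (cmod z) *\<^sub>R (z ^ n * cnj z ^ m) \<partial>lborel) = 0"
proof -
  define d where "d = (if n > m then n - m else m - n)"
  define u where "u = cis (pi / real d)"
  have d: "d > 0"
    using assms(2) by (auto simp: d_def)
  have u: "cmod u = 1" "cnj u * u = 1"
    by (simp_all add: u_def cis_cnj cis_mult)
  have "u ^ d = cis (real d * (pi / real d))"
    unfolding u_def by (rule Complex.DeMoivre)
  then have ud: "u ^ d = -1"
    using d by simp
  have phase: "u ^ n * cnj u ^ m = -1"
  proof (cases "n > m")
    case True
    then have "u ^ n * cnj u ^ m = u ^ d * (cnj u * u) ^ m"
      by (simp add: d_def power_add[symmetric] power_mult_distrib mult_ac)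
    then show ?thesis
      by (simp add: ud u)
  next
    case False
    then have "u ^ n * cnj u ^ m = cnj (u ^ d) * (cnj u * u) ^ n"
      using assms(2) by (simp add: d_def power_add[symmetric] power_mult_distrib mult_ac)
    then show ?thesis
      by (simp add: ud u)
  qed
  define F where "F z = G (cmod z) *\<^sub>R (z ^ n * cnj z ^ m)" for z :: complex
  have [measurable]: "F \<in> borel_measurable borel"
    unfolding F_def by measurable
  have "F (u * z) = G (cmod z) *\<^sub>R ((u ^ n * cnj u ^ m) * (z ^ n * cnj z ^ m))" for z
    by (simp add: F_def norm_mult u power_mult_distrib mult_ac)
  then have "F (u * z) = - F z" for z
    by (simp add: phase F_def)
  then have "integral\<^sup>L lborel F = - integral\<^sup>L lborel F"
    using lborel_integral_rotation[OF u(1), of F] by simp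
  then have "integral\<^sup>L lborel F = 0"
    by simp
  then show ?thesis
    unfolding F_def .
qed

lemma emeasure_ball_complex:
  assumes "r \<ge> 0"
  shows "emeasure lborel (ball (0::complex) r) = ennreal (pi * r\<^sup>2)"
proof -
  have "Gamma (2::real) = 1"
    using Gamma_fact[of 1] by simp
  then show ?thesis
    using assms by (simp add: emeasure_ball unit_ball_vol_def)
qed

lemma emeasure_distr_neg_norm_square:
  "emeasure (distr (lborel :: complex measure) borel (\<lambda>z. - (cmod z)\<^sup>2)) {x<..} = ennreal (pi * max 0 (- x))"
proof (cases "x < 0")
  case True
  have "- (cmod z)\<^sup>2 > x \<longleftrightarrow> cmod z < sqrt (- x)" for z :: complex
    using real_sqrt_less_iff[of "(cmod z)\<^sup>2" "- x"] by auto
  then have "(\<lambda>z::complex. - (cmod z)\<^sup>2) -` {x<..} = ball 0 (sqrt (- x))"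
    by (auto simp: dist_norm)
  then show ?thesis
    using True by (simp add: emeasure_distr emeasure_ball_complex)
next
  case False
  then have "(\<lambda>z::complex. - (cmod z)\<^sup>2) -` {x<..} = {}"
    by (auto simp: not_less) (smt (verit) zero_le_power2)
  then show ?thesis
    using False by (simp add: emeasure_distr)
qed

text \<open>The preimages of the sets \<open>{x<..}\<close>, which determine a measure on the real line, under
  \<open>- |z|\<^sup>2\<close> are discs.\<close>
lemma distr_lborel_neg_norm_square:
  "distr (lborel :: complex measure) borel (\<lambda>z. - (cmod z)\<^sup>2) =
     density lborel (\<lambda>t. ennreal (pi * indicator {..0} t))"
proof (rule measure_eqI_lessThan)
  fix x :: real
  show "emeasure (distr lborel borel (\<lambda>z::complex. - (cmod z)\<^sup>2)) {x<..} < \<infinity>"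
    by (simp add: emeasure_distr_neg_norm_square)
  have "emeasure (density lborel (\<lambda>t. ennreal (pi * indicator {..0} t))) {x<..} =
      ennreal pi * emeasure lborel ({x<..} \<inter> {..0})"
    by (subst emeasure_density)
       (auto simp: ennreal_mult nn_integral_cmult_indicator[symmetric] intro!: nn_integral_cong
             split: split_indicator)
  also have "\<dots> = ennreal (pi * max 0 (- x))"
  proof (cases "x < 0")
    case True
    then have "{x<..} \<inter> {..0} = {x<..0::real}"
      by auto
    then show ?thesis
      using True by (simp add: ennreal_mult[symmetric])
  next
    case False
    then have "{x<..} \<inter> {..0} = ({} :: real set)"
      by auto
    then show ?thesis
      using False by simp
  qed
  finally show "emeasure (distr lborel borel (\<lambda>z::complex. - (cmod z)\<^sup>2)) {x<..} =
      emeasure (density lborel (\<lambda>t. ennreal (pi * indicator {..0} t))) {x<..}"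
    by (simp add: emeasure_distr_neg_norm_square)
qed auto

lemma nn_integral_complex_radial:
  fixes H :: "real \<Rightarrow> ennreal"
  assumes [measurable]: "H \<in> borel_measurable borel"
  shows "(\<integral>\<^sup>+z. H ((cmod z)\<^sup>2) \<partial>(lborel :: complex measure)) =
         (\<integral>\<^sup>+s. ennreal pi * indicator {0..} s * H s \<partial>lborel)"
proof -
  have "(\<integral>\<^sup>+z. H ((cmod z)\<^sup>2) \<partial>(lborel :: complex measure)) =
      (\<integral>\<^sup>+t. H (- t) \<partial>distr (lborel :: complex measure) borel (\<lambda>z. - (cmod z)\<^sup>2))"
    by (subst nn_integral_distr) auto
  also have "\<dots> = (\<integral>\<^sup>+t. (\<lambda>s. ennreal pi * indicator {0..} s * H s) (- t) \<partial>lborel)"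
    by (auto simp: distr_lborel_neg_norm_square nn_integral_density ennreal_mult
        intro!: nn_integral_cong split: split_indicator)
  also have "\<dots> = (\<integral>\<^sup>+s. ennreal pi * indicator {0..} s * H s \<partial>distr lborel borel uminus)"
    by (subst nn_integral_distr) auto
  finally show ?thesis
    by (simp add: lborel_distr_uminus)
qed

lemma Beta_moment_eq:
  assumes "\<alpha> > -1"
  shows "(\<alpha> + 1) * Beta (real n + 1) (\<alpha> + 1) = fact n / pochhammer (\<alpha> + 2) n"
proof -
  have not_int: "\<alpha> + 1 \<notin> \<int>\<^sub>\<le>\<^sub>0" "\<alpha> + 2 \<notin> \<int>\<^sub>\<le>\<^sub>0"
    using assms by (auto elim!: nonpos_Ints_cases)
  have Gamma_2: "Gamma (\<alpha> + 2) = (\<alpha> + 1) * Gamma (\<alpha> + 1)"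
    using Gamma_plus1[OF not_int(1)] by (simp add: add.assoc)
  have Gamma_n: "Gamma (real n + 1) = fact n"
    using Gamma_fact[of n] by (simp add: add.commute)
  have sum: "real n + 1 + (\<alpha> + 1) = \<alpha> + 2 + real n"
    by simp
  have "(\<alpha> + 1) * Beta (real n + 1) (\<alpha> + 1) = fact n * ((\<alpha> + 1) * Gamma (\<alpha> + 1)) / Gamma (\<alpha> + 2 + real n)"
    unfolding Beta_def sum Gamma_n by simp
  also have "\<dots> = fact n * Gamma (\<alpha> + 2) / Gamma (\<alpha> + 2 + real n)"
    by (simp only: Gamma_2)
  also have "\<dots> = fact n / pochhammer (\<alpha> + 2) n"
    using assms pochhammer_Gamma[OF not_int(2), of n] by (simp add: Gamma_real_pos)
  finally show ?thesis .
qed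

lemma borel_measurable_scaleR_continuous_on_disc:
  fixes F :: "complex \<Rightarrow> 'b::{banach, second_countable_topology}"
  assumes F: "continuous_on (ball 0 1) F" and [measurable]: "g \<in> borel_measurable borel"
    and g0: "\<And>z. z \<notin> ball 0 1 \<Longrightarrow> g z = 0"
  shows "(\<lambda>z. g z *\<^sub>R F z) \<in> borel_measurable borel"
proof -
  have "F \<in> borel_measurable (restrict_space borel (ball 0 1))"
    by (rule borel_measurable_continuous_on_restrict[OF F])
  then have [measurable]: "(\<lambda>z. indicator (ball 0 1) z *\<^sub>R F z) \<in> borel_measurable borel"
    by (subst borel_measurable_restrict_space_iff[symmetric]) auto
  have "(\<lambda>z. g z *\<^sub>R (indicator (ball 0 1) z *\<^sub>R F z)) \<in> borel_measurable borel"
    by (rule borel_measurable_scaleR) measurable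
  moreover have "(\<lambda>z. g z *\<^sub>R F z) = (\<lambda>z. g z *\<^sub>R (indicator (ball 0 1) z *\<^sub>R F z))"
    using g0 by (auto simp: fun_eq_iff indicator_def)
  ultimately show ?thesis
    by simp
qed

lemma integral_suminf_dominated:
  fixes g :: "nat \<Rightarrow> 'a \<Rightarrow> 'b::{banach, second_countable_topology}"
  assumes [measurable]: "\<And>n. g n \<in> borel_measurable M"
    and W: "integrable M W" and bound: "\<And>n x. norm (g n x) \<le> a n * W x" and a: "summable a"
  shows "(\<integral>x. (\<Sum>n. g n x) \<partial>M) = (\<Sum>n. integral\<^sup>L M (g n))"
proof (rule integral_suminf)
  show g_int: "integrable M (g n)" for n
    using W bound by (rule_tac Bochner_Integration.integrable_bound[of _ "\<lambda>x. a n * W x"])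
      (auto intro: order_trans[OF _ abs_ge_self])
  have "summable (\<lambda>n. norm (g n x))" for x
    by (rule summable_comparison_test'[OF summable_mult2[OF a, of "W x"]]) (simp add: bound)
  then show "AE x in M. summable (\<lambda>n. norm (g n x))"
    by simp
  have "norm (\<integral>x. norm (g n x) \<partial>M) \<le> a n * integral\<^sup>L M W" for n
  proof -
    have "(\<integral>x. norm (g n x) \<partial>M) \<le> (\<integral>x. a n * W x \<partial>M)"
      using g_int W bound by (intro integral_mono integrable_norm Bochner_Integration.integrable_mult_right)
    then show ?thesis
      using integral_nonneg_AE[of "\<lambda>x. norm (g n x)" M] by simp
  qed
  then show "summable (\<lambda>n. \<integral>x. norm (g n x) \<partial>M)"
    by (rule summable_comparison_test'[OF summable_mult2[OF a, of "integral\<^sup>L M W"]])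
qed

section \<open>Power series of holomorphic functions and of the kernel\<close>

lemma continuous_on_disc_bounded_cball:
  fixes f :: "complex \<Rightarrow> 'b::real_normed_vector"
  assumes f: "continuous_on (ball 0 1) f" and r: "0 \<le> r" "r < 1"
  obtains B where "B \<ge> 0" "\<And>z. cmod z \<le> r \<Longrightarrow> norm (f z) \<le> B"
proof -
  have "compact (f ` cball 0 r)"
    using r by (intro compact_continuous_image continuous_on_subset[OF f]) auto
  then obtain B where B: "\<forall>z\<in>cball 0 r. norm (f z) \<le> B"
    by (auto dest!: compact_imp_bounded simp: bounded_iff)
  moreover have "norm (f 0) \<le> B"
    using B r by simp
  ultimately show ?thesis
    using that[of B] norm_ge_zero[of "f 0"] by simp
qed

definition taylor_coeff :: "(complex \<Rightarrow> complex) \<Rightarrow> nat \<Rightarrow> complex" where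
  "taylor_coeff f n = (deriv ^^ n) f 0 / fact n"

lemma taylor_coeff_sums:
  "f holomorphic_on ball 0 1 \<Longrightarrow> z \<in> ball 0 1 \<Longrightarrow> (\<lambda>n. taylor_coeff f n * z ^ n) sums f z"
  using holomorphic_power_series[of f 0 1 z] by (simp add: taylor_coeff_def)

lemma summable_norm_taylor_coeff:
  assumes f: "f holomorphic_on ball 0 1" and r: "0 \<le> r" "r < 1"
  shows "summable (\<lambda>n. norm (taylor_coeff f n) * r ^ n)"
proof -
  define x where "x = complex_of_real ((1 + r) / 2)"
  have norm_x: "norm x = (1 + r) / 2"
    unfolding x_def by (subst norm_of_real) (use r in simp)
  then have "x \<in> ball 0 1"
    using r by simp
  then have "summable (\<lambda>n. taylor_coeff f n * x ^ n)"
    using taylor_coeff_sums[OF f] sums_summable by blast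
  moreover have "norm (complex_of_real r) < norm x"
    using r norm_x by simp
  ultimately have "summable (\<lambda>n. norm (taylor_coeff f n * complex_of_real r ^ n))"
    by (rule powser_insidea)
  then show ?thesis
    using r by (simp add: norm_mult norm_power)
qed

text \<open>The coefficients of the binomial series of \<open>(1 - t)^-(\<alpha> + 2)\<close>.\<close>
definition kernel_coeff :: "real \<Rightarrow> nat \<Rightarrow> real" where
  "kernel_coeff \<alpha> n = pochhammer (\<alpha> + 2) n / fact n"

lemma kernel_coeff_pos: "\<alpha> > -1 \<Longrightarrow> kernel_coeff \<alpha> n > 0"
  unfolding kernel_coeff_def by (intro divide_pos_pos pochhammer_pos) auto

lemma bergman_kernel_sums:
  assumes "norm (cnj w * z) < 1"
  shows "(\<lambda>n. of_real (kernel_coeff \<alpha> n) * (cnj w * z) ^ n) sums bergman_kernel \<alpha> w z"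
proof -
  define A where "A = complex_of_real \<alpha> + 2"
  have "(\<lambda>n. ((- A) gchoose n) * (- (cnj w * z)) ^ n) sums (1 + - (cnj w * z)) powr (- A)"
    using assms by (intro gen_binomial_complex) simp
  moreover have "((- A) gchoose n) * (- (cnj w * z)) ^ n = of_real (kernel_coeff \<alpha> n) * (cnj w * z) ^ n" for n
  proof -
    have "pochhammer A n = of_real (pochhammer (\<alpha> + 2) n)"
      unfolding A_def using pochhammer_of_real[of "\<alpha> + 2" n] by simp
    moreover have "(- A) gchoose n = (-1) ^ n * pochhammer A n / fact n"
      by (simp add: gbinomial_pochhammer)
    moreover have "(-1::complex) ^ n * (-1) ^ n = 1"
      by (simp flip: power_add)
    ultimately have "((- A) gchoose n) * (- (cnj w * z)) ^ n =
        ((-1) ^ n * (-1) ^ n) * (of_real (pochhammer (\<alpha> + 2) n) / fact n) * (cnj w * z) ^ n"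
      by (simp only: power_minus[of "cnj w * z"]) (simp add: field_simps)
    then show ?thesis
      by (simp add: kernel_coeff_def \<open>(-1::complex) ^ n * (-1) ^ n = 1\<close>)
  qed
  ultimately show ?thesis
    by (simp add: bergman_kernel_def A_def)
qed

lemma summable_kernel_coeff:
  assumes "0 \<le> x" "x < 1"
  shows "summable (\<lambda>n. kernel_coeff \<alpha> n * x ^ n)"
proof -
  have "norm (cnj (complex_of_real (sqrt x)) * complex_of_real (sqrt x)) < 1"
    using assms by (simp add: norm_mult)
  note summable = sums_summable[OF bergman_kernel_sums[OF this, of \<alpha>]]
  have "complex_of_real (sqrt x) * complex_of_real (sqrt x) = complex_of_real x"
    using assms by (simp flip: of_real_mult)
  then have "summable (\<lambda>n. complex_of_real (kernel_coeff \<alpha> n) * complex_of_real x ^ n)"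
    using summable by simp
  then have "summable (\<lambda>n. complex_of_real (kernel_coeff \<alpha> n * x ^ n))"
    by (simp only: of_real_mult of_real_power)
  then show ?thesis
    by (simp only: summable_complex_of_real)
qed

lemma bergman_kernel_holomorphic:
  assumes "cmod w < 1"
  shows "bergman_kernel \<alpha> w holomorphic_on ball 0 1"
proof -
  have "Re (1 - cnj w * z) > 0" if "cmod z < 1" for z
  proof -
    have "Re (cnj w * z) \<le> cmod w * cmod z"
      using complex_Re_le_cmod[of "cnj w * z"] by (simp add: norm_mult)
    also have "\<dots> < 1"
      using assms that by (smt (verit) mult_left_le norm_ge_zero)
    finally show ?thesis
      by simp
  qed
  then have "(\<lambda>z. (1 - cnj w * z) powr (- (of_real \<alpha> + 2))) holomorphic_on ball 0 1"
    by (intro holomorphic_intros) (metis complex_nonpos_Reals_iff mem_ball_0 not_le)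
  then show ?thesis
    by (simp add: bergman_kernel_def[abs_def])
qed

definition exhausting_radius :: "nat \<Rightarrow> real" where
  "exhausting_radius j = 1 - 1 / (real j + 2)"

lemma exhausting_radius_bounds: "0 \<le> exhausting_radius j" "exhausting_radius j < 1"
  by (auto simp: exhausting_radius_def field_simps)

lemma exhausting_radius_eventually_gt:
  assumes "x < 1"
  shows "eventually (\<lambda>j. x < exhausting_radius j) sequentially"
proof -
  have "(\<lambda>j. 1 / (real j + 2)) \<longlonglongrightarrow> 0"
    by real_asymp
  from tendsto_diff[OF tendsto_const[of 1] this]
  have "exhausting_radius \<longlonglongrightarrow> 1"
    by (simp add: exhausting_radius_def[abs_def])
  then show ?thesis
    using assms by (rule order_tendstoD)
qed

section \<open>The weight and its moments\<close>

locale weighted_bergman =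
  fixes \<alpha> :: real
  assumes alpha_gt: "\<alpha> > -1"
begin

text \<open>The density of \<open>dA_alpha \<alpha>\<close> with respect to Lebesgue measure, extended by \<open>0\<close> off the disc.\<close>
definition weight :: "complex \<Rightarrow> real" where
  "weight z = (if cmod z < 1 then (\<alpha> + 1) / pi * (1 - (cmod z)\<^sup>2) powr \<alpha> else 0)"

lemma weight_nonneg: "0 \<le> weight z"
  using alpha_gt by (simp add: weight_def)

lemma weight_pos:
  assumes "cmod z < 1"
  shows "weight z > 0"
proof -
  have "1 - (cmod z)\<^sup>2 > 0"
    using assms by (simp add: abs_square_less_1)
  then show ?thesis
    using assms alpha_gt by (simp add: weight_def)
qed

lemma weight_outside: "z \<notin> ball 0 1 \<Longrightarrow> weight z = 0"
  by (simp add: weight_def)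

lemma borel_measurable_weight [measurable]: "weight \<in> borel_measurable borel"
  unfolding weight_def by measurable

lemma nn_integral_weight_moment:
  "(\<integral>\<^sup>+z. ennreal (weight z * (cmod z) ^ (2 * n)) \<partial>lborel) = ennreal ((\<alpha> + 1) * Beta (real n + 1) (\<alpha> + 1))"
proof -
  define H where "H s = ennreal (if s < 1 then (\<alpha> + 1) / pi * (1 - s) powr \<alpha> * s ^ n else 0)" for s :: real
  have [measurable]: "H \<in> borel_measurable borel"
    unfolding H_def by measurable
  have "(\<integral>\<^sup>+z. ennreal (weight z * (cmod z) ^ (2 * n)) \<partial>lborel) = (\<integral>\<^sup>+z. H ((cmod z)\<^sup>2) \<partial>(lborel :: complex measure))"
    by (intro nn_integral_cong) (simp add: H_def weight_def power_mult abs_square_less_1)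
  also have "\<dots> = (\<integral>\<^sup>+s. ennreal pi * indicator {0..} s * H s \<partial>lborel)"
    by (rule nn_integral_complex_radial) simp
  also have "\<dots> = (\<integral>\<^sup>+s. ennreal (indicator {0..1} s * ((\<alpha> + 1) * (s powr real n * (1 - s) powr \<alpha>))) \<partial>lborel)"
  proof (rule nn_integral_cong_AE)
    show "AE s in lborel. ennreal pi * indicator {0..} s * H s =
        ennreal (indicator {0..1} s * ((\<alpha> + 1) * (s powr real n * (1 - s) powr \<alpha>)))"
      using AE_lborel_singleton[of 0]
    proof eventually_elim
      case (elim s)
      then show ?case
        using alpha_gt
        by (cases "0 \<le> s \<and> s < 1") (auto simp: H_def indicator_def powr_realpow ennreal_mult[symmetric])
    qed
  qed
  also have "\<dots> = ennreal ((\<alpha> + 1) * Beta (real n + 1) (\<alpha> + 1))"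
  proof (rule nn_integral_has_integral_lebesgue)
    have "((\<lambda>t. t powr (real n + 1 - 1) * (1 - t) powr (\<alpha> + 1 - 1)) has_integral Beta (real n + 1) (\<alpha> + 1)) {0..1}"
      using alpha_gt by (intro has_integral_Beta_real) auto
    then show "((\<lambda>s. (\<alpha> + 1) * (s powr real n * (1 - s) powr \<alpha>)) has_integral (\<alpha> + 1) * Beta (real n + 1) (\<alpha> + 1)) {0..1}"
      by (intro has_integral_mult_right) simp
  qed (use alpha_gt in simp)
  finally show ?thesis .
qed

lemma weight_moment:
  shows integrable_weight_moment: "integrable lborel (\<lambda>z. weight z * (cmod z) ^ (2 * n))"
    and integral_weight_moment: "(\<integral>z. weight z * (cmod z) ^ (2 * n) \<partial>lborel) = fact n / pochhammer (\<alpha> + 2) n"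
proof -
  have "pochhammer (\<alpha> + 2) n > 0"
    using alpha_gt by (intro pochhammer_pos) simp
  then have "0 \<le> (\<alpha> + 1) * Beta (real n + 1) (\<alpha> + 1)"
    using Beta_moment_eq[OF alpha_gt, of n] by simp
  then have "integrable lborel (\<lambda>z. weight z * (cmod z) ^ (2 * n)) \<and>
      (\<integral>z. weight z * (cmod z) ^ (2 * n) \<partial>lborel) = (\<alpha> + 1) * Beta (real n + 1) (\<alpha> + 1)"
    using nn_integral_weight_moment[of n] weight_nonneg
    by (subst nn_integral_eq_integrable[symmetric]) auto
  then show "integrable lborel (\<lambda>z. weight z * (cmod z) ^ (2 * n))"
    and "(\<integral>z. weight z * (cmod z) ^ (2 * n) \<partial>lborel) = fact n / pochhammer (\<alpha> + 2) n"
    using Beta_moment_eq[OF alpha_gt] by auto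
qed

lemma integrable_weight: "integrable lborel weight"
  and integral_weight: "integral\<^sup>L lborel weight = 1"
  using weight_moment[of 0] by auto

lemma integrable_bounded_by_weight:
  fixes g :: "complex \<Rightarrow> 'b::{banach, second_countable_topology}"
  assumes [measurable]: "g \<in> borel_measurable borel" and bound: "\<And>z. norm (g z) \<le> C * weight z"
  shows "integrable lborel g"
proof (rule Bochner_Integration.integrable_bound)
  show "integrable lborel (\<lambda>z. C * weight z)"
    using integrable_weight by simp
  show "AE z in lborel. norm (g z) \<le> norm (C * weight z)"
    using bound by (auto intro: order_trans[OF _ abs_ge_self])
qed simp

section \<open>The reproducing formula\<close>

definition weight_trunc :: "real \<Rightarrow> complex \<Rightarrow> real" where
  "weight_trunc r z = indicator (ball 0 r) z * weight z"

lemma borel_measurable_weight_trunc [measurable]: "weight_trunc r \<in> borel_measurable borel"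
  unfolding weight_trunc_def[abs_def]
  by (intro borel_measurable_times borel_measurable_indicator borel_measurable_weight) auto

lemma weight_trunc_nonneg: "0 \<le> weight_trunc r z"
  by (simp add: weight_trunc_def weight_nonneg)

lemma weight_trunc_le: "weight_trunc r z \<le> weight z"
  by (simp add: weight_trunc_def weight_nonneg indicator_def)

lemma weight_trunc_outside: "cmod z \<ge> r \<Longrightarrow> weight_trunc r z = 0"
  by (simp add: weight_trunc_def indicator_def)

lemma weight_trunc_eventually: "eventually (\<lambda>j. weight_trunc (exhausting_radius j) z = weight z) sequentially"
proof (cases "cmod z < 1")
  case True
  show ?thesis
    using exhausting_radius_eventually_gt[OF True]
    by eventually_elim (simp add: weight_trunc_def indicator_def)
next
  case False
  then show ?thesis
    by (simp add: weight_trunc_def weight_def)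
qed

definition moment_trunc :: "real \<Rightarrow> nat \<Rightarrow> real" where
  "moment_trunc r n = (\<integral>z. weight_trunc r z * (cmod z) ^ (2 * n) \<partial>lborel)"

lemma integral_weight_trunc_monomials:
  "(\<integral>z. weight_trunc r z *\<^sub>R (z ^ n * cnj z ^ m) \<partial>lborel) = (if n = m then of_real (moment_trunc r m) else 0)"
proof (cases "n = m")
  case True
  have "z ^ m * cnj z ^ m = of_real ((cmod z) ^ (2 * m))" for z
    by (simp add: power_mult_distrib[symmetric] complex_norm_square[symmetric] power_mult)
  then have "(\<integral>z. weight_trunc r z *\<^sub>R (z ^ n * cnj z ^ m) \<partial>lborel) =
      (\<integral>z. of_real (weight_trunc r z * (cmod z) ^ (2 * m)) \<partial>lborel)"
    using True by (simp add: scaleR_conv_of_real)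
  also have "\<dots> = of_real (moment_trunc r m)"
    by (simp only: integral_complex_of_real moment_trunc_def)
  finally show ?thesis
    using True by simp
next
  case False
  define G where "G t = (if t < r \<and> t < 1 then (\<alpha> + 1) / pi * (1 - t\<^sup>2) powr \<alpha> else 0)" for t :: real
  have [measurable]: "G \<in> borel_measurable borel"
    unfolding G_def by measurable
  have "weight_trunc r z = G (cmod z)" for z
    by (simp add: G_def weight_trunc_def weight_def indicator_def)
  then show ?thesis
    using lborel_integral_radial_monomial_orthogonal[of G n m] False by simp
qed

text \<open>Expand \<open>f\<close> in its Taylor series: only the \<open>m\<close>-th term survives.\<close>
lemma integral_weight_trunc_conj_power:
  assumes f: "f holomorphic_on ball 0 1" and r: "0 \<le> r" "r < 1"
  shows "(\<integral>z. weight_trunc r z *\<^sub>R (f z * cnj z ^ m) \<partial>lborel) = taylor_coeff f m * of_real (moment_trunc r m)"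
proof -
  define g where "g n z = taylor_coeff f n * (weight_trunc r z *\<^sub>R (z ^ n * cnj z ^ m))" for n z
  have [measurable]: "g n \<in> borel_measurable borel" for n
    unfolding g_def by measurable
  have bound: "norm (g n z) \<le> (norm (taylor_coeff f n) * r ^ n * r ^ m) * weight z" for n z
  proof (cases "cmod z < r")
    case True
    have "norm (g n z) = norm (taylor_coeff f n) * weight_trunc r z * (cmod z ^ n * cmod z ^ m)"
      using weight_trunc_nonneg by (simp add: g_def norm_mult norm_power)
    also have "\<dots> \<le> norm (taylor_coeff f n) * weight z * (r ^ n * r ^ m)"
      using True r weight_trunc_le weight_trunc_nonneg weight_nonneg
      by (intro mult_mono power_mono) auto
    finally show ?thesis
      by (simp add: mult_ac)
  next
    case False
    then show ?thesis
      using weight_nonneg r by (simp add: g_def weight_trunc_outside)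
  qed
  have sums: "(\<Sum>n. g n z) = weight_trunc r z *\<^sub>R (f z * cnj z ^ m)" for z
  proof (cases "cmod z < r")
    case True
    then have "z \<in> ball 0 1"
      using r by simp
    from sums_mult2[OF taylor_coeff_sums[OF f this], of "weight_trunc r z *\<^sub>R cnj z ^ m"]
    show ?thesis
      by (simp add: g_def mult_ac scaleR_conv_of_real sums_iff)
  next
    case False
    then show ?thesis
      by (simp add: g_def weight_trunc_outside)
  qed
  have "(\<integral>z. weight_trunc r z *\<^sub>R (f z * cnj z ^ m) \<partial>lborel) = (\<Sum>n. integral\<^sup>L lborel (g n))"
    unfolding sums[symmetric]
    by (rule integral_suminf_dominated[OF _ integrable_weight bound summable_mult2[OF summable_norm_taylor_coeff[OF f r]]])
      measurable
  also have "\<dots> = (\<Sum>n. if n = m then taylor_coeff f m * of_real (moment_trunc r m) else 0)"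
    by (intro suminf_cong) (simp only: g_def[abs_def] integral_mult_right_zero integral_weight_trunc_monomials, simp)
  also have "\<dots> = taylor_coeff f m * of_real (moment_trunc r m)"
    using sums_single[of m "\<lambda>_. taylor_coeff f m * of_real (moment_trunc r m)"] by (simp add: sums_iff)
  finally show ?thesis .
qed

lemma moment_trunc_bounds: "0 \<le> moment_trunc r n" "moment_trunc r n \<le> fact n / pochhammer (\<alpha> + 2) n"
proof -
  show "0 \<le> moment_trunc r n"
    unfolding moment_trunc_def using weight_trunc_nonneg by (intro integral_nonneg_AE) auto
  have "integrable lborel (\<lambda>z. weight_trunc r z * (cmod z) ^ (2 * n))"
    using weight_trunc_le weight_trunc_nonneg weight_nonneg
    by (intro Bochner_Integration.integrable_bound[OF integrable_weight_moment[of n]])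
       (auto intro!: mult_right_mono simp: abs_mult)
  then have "moment_trunc r n \<le> (\<integral>z. weight z * (cmod z) ^ (2 * n) \<partial>lborel)"
    unfolding moment_trunc_def using weight_trunc_le
    by (intro integral_mono integrable_weight_moment mult_right_mono) auto
  then show "moment_trunc r n \<le> fact n / pochhammer (\<alpha> + 2) n"
    by (simp add: integral_weight_moment)
qed

lemma tendsto_integral_weight_trunc:
  fixes F :: "complex \<Rightarrow> 'b::{banach, second_countable_topology}"
  assumes F: "continuous_on (ball 0 1) F" and int: "integrable lborel (\<lambda>z. weight z *\<^sub>R F z)"
  shows "(\<lambda>j. \<integral>z. weight_trunc (exhausting_radius j) z *\<^sub>R F z \<partial>lborel) \<longlonglongrightarrow> (\<integral>z. weight z *\<^sub>R F z \<partial>lborel)"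
proof (rule integral_dominated_convergence[where w = "\<lambda>z. norm (weight z *\<^sub>R F z)"])
  show "integrable lborel (\<lambda>z. norm (weight z *\<^sub>R F z))"
    using int by (rule integrable_norm)
  show "(\<lambda>z. weight z *\<^sub>R F z) \<in> borel_measurable lborel"
    using borel_measurable_scaleR_continuous_on_disc[OF F borel_measurable_weight weight_outside] by simp
  have "weight_trunc (exhausting_radius j) z = 0" if "z \<notin> ball 0 1" for j z
    using that exhausting_radius_bounds[of j] by (intro weight_trunc_outside) auto
  then show "(\<lambda>z. weight_trunc (exhausting_radius j) z *\<^sub>R F z) \<in> borel_measurable lborel" for j
    using borel_measurable_scaleR_continuous_on_disc[OF F borel_measurable_weight_trunc] by simp
  show "AE z in lborel. (\<lambda>j. weight_trunc (exhausting_radius j) z *\<^sub>R F z) \<longlonglongrightarrow> weight z *\<^sub>R F z"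
  proof (intro AE_I2)
    fix z
    show "(\<lambda>j. weight_trunc (exhausting_radius j) z *\<^sub>R F z) \<longlonglongrightarrow> weight z *\<^sub>R F z"
      by (rule tendsto_eventually) (use weight_trunc_eventually[of z] in \<open>eventually_elim, simp\<close>)
  qed
  show "AE z in lborel. norm (weight_trunc (exhausting_radius j) z *\<^sub>R F z) \<le> norm (weight z *\<^sub>R F z)" for j
    using weight_trunc_le weight_trunc_nonneg weight_nonneg by (auto intro!: mult_right_mono)
qed

lemma moment_trunc_tendsto: "(\<lambda>j. moment_trunc (exhausting_radius j) n) \<longlonglongrightarrow> fact n / pochhammer (\<alpha> + 2) n"
proof -
  have "continuous_on (ball 0 1) (\<lambda>z. (cmod z) ^ (2 * n))"
    by (intro continuous_intros)
  from tendsto_integral_weight_trunc[OF this] show ?thesis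
    using integrable_weight_moment[of n] by (simp add: moment_trunc_def integral_weight_moment)
qed

text \<open>Expand \<open>cnj (k\<^sub>w z)\<close> in its binomial series and integrate termwise.\<close>
lemma integral_weight_trunc_kernel:
  assumes f: "f holomorphic_on ball 0 1" and w: "w \<in> ball 0 1" and r: "0 \<le> r" "r < 1"
  shows "(\<integral>z. weight_trunc r z *\<^sub>R (f z * cnj (bergman_kernel \<alpha> w z)) \<partial>lborel) =
         (\<Sum>n. taylor_coeff f n * w ^ n * of_real (kernel_coeff \<alpha> n * moment_trunc r n))"
proof -
  have f_cont: "continuous_on (ball 0 1) f"
    using f holomorphic_on_imp_continuous_on by blast
  obtain B where B0: "B \<ge> 0" and B: "\<And>z. cmod z \<le> r \<Longrightarrow> cmod (f z) \<le> B"
    using continuous_on_disc_bounded_cball[OF f_cont r] by blast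
  define h where "h n z = (weight_trunc r z *\<^sub>R (f z * cnj z ^ n)) * (of_real (kernel_coeff \<alpha> n) * w ^ n)" for n z
  have "(\<lambda>z. weight_trunc r z *\<^sub>R (f z * cnj z ^ n)) \<in> borel_measurable borel" for n
    using r weight_trunc_outside
    by (intro borel_measurable_scaleR_continuous_on_disc continuous_intros f_cont) auto
  then have [measurable]: "h n \<in> borel_measurable borel" for n
    unfolding h_def by measurable
  have bound: "norm (h n z) \<le> (B * (kernel_coeff \<alpha> n * (cmod w * r) ^ n)) * weight z" for n z
  proof (cases "cmod z < r")
    case True
    have "norm (h n z) = weight_trunc r z * (cmod (f z) * cmod z ^ n) * (kernel_coeff \<alpha> n * cmod w ^ n)"
      using weight_trunc_nonneg[of r z] kernel_coeff_pos[OF alpha_gt, of n]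
      by (simp add: h_def norm_mult norm_power)
    also have "\<dots> \<le> weight z * (B * r ^ n) * (kernel_coeff \<alpha> n * cmod w ^ n)"
      using True weight_trunc_le weight_trunc_nonneg weight_nonneg kernel_coeff_pos[OF alpha_gt, of n] B[of z] B0 r
      by (intro mult_mono power_mono mult_nonneg_nonneg) auto
    finally show ?thesis
      by (simp add: mult_ac power_mult_distrib)
  next
    case False
    then show ?thesis
      using weight_nonneg kernel_coeff_pos[OF alpha_gt, of n] B[of 0] r
      using B0 by (simp add: h_def weight_trunc_outside)
  qed
  have sums: "(\<Sum>n. h n z) = weight_trunc r z *\<^sub>R (f z * cnj (bergman_kernel \<alpha> w z))" for z
  proof (cases "cmod z < r")
    case True
    then have "norm (cnj w * z) < 1"
      using w r by (simp add: norm_mult) (smt (verit) mult_left_le norm_ge_zero)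
    from sums_cnj[THEN iffD2, OF bergman_kernel_sums[OF this, of \<alpha>]]
    have "(\<lambda>n. cnj (of_real (kernel_coeff \<alpha> n) * (cnj w * z) ^ n)) sums cnj (bergman_kernel \<alpha> w z)" .
    from sums_mult[OF this, of "weight_trunc r z *\<^sub>R f z"]
    show ?thesis
      by (simp add: h_def scaleR_conv_of_real power_mult_distrib mult_ac sums_iff)
  next
    case False
    then show ?thesis
      by (simp add: h_def weight_trunc_outside)
  qed
  have integral_h: "integral\<^sup>L lborel (h n) = taylor_coeff f n * w ^ n * of_real (kernel_coeff \<alpha> n * moment_trunc r n)" for n
    unfolding h_def integral_mult_left_zero integral_weight_trunc_conj_power[OF f r]
    by (simp add: mult_ac)
  have summable: "summable (\<lambda>n. kernel_coeff \<alpha> n * (cmod w * r) ^ n)"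
  proof (rule summable_kernel_coeff)
    show "cmod w * r < 1"
      using w r mult_left_le[of r "cmod w"] by simp
  qed (use r in simp)
  have "(\<integral>z. (\<Sum>n. h n z) \<partial>lborel) = (\<Sum>n. integral\<^sup>L lborel (h n))"
    by (rule integral_suminf_dominated[OF _ integrable_weight bound summable_mult[OF summable]]) measurable
  then show ?thesis
    by (simp add: sums integral_h)
qed

lemma integral_weight_kernel:
  assumes f: "f holomorphic_on ball 0 1" and w: "w \<in> ball 0 1"
    and int: "integrable lborel (\<lambda>z. weight z *\<^sub>R (f z * cnj (bergman_kernel \<alpha> w z)))"
  shows "(\<integral>z. weight z *\<^sub>R (f z * cnj (bergman_kernel \<alpha> w z)) \<partial>lborel) = f w"
proof -
  have cont: "continuous_on (ball 0 1) (\<lambda>z. f z * cnj (bergman_kernel \<alpha> w z))"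
    using f bergman_kernel_holomorphic[of w \<alpha>] w
    by (intro continuous_intros) (auto intro: holomorphic_on_imp_continuous_on)
  define c where "c k j = taylor_coeff f k * w ^ k * of_real (kernel_coeff \<alpha> k * moment_trunc (exhausting_radius j) k)" for k j
  have c_lim: "(\<lambda>j. c k j) \<longlonglongrightarrow> taylor_coeff f k * w ^ k" for k
  proof -
    have "pochhammer (\<alpha> + 2) k > 0"
      using alpha_gt by (intro pochhammer_pos) simp
    then have "(\<lambda>j. kernel_coeff \<alpha> k * moment_trunc (exhausting_radius j) k) \<longlonglongrightarrow> 1"
      using tendsto_mult_left[OF moment_trunc_tendsto, of "kernel_coeff \<alpha> k" k]
      by (simp add: kernel_coeff_def)
    from tendsto_of_real[OF this, where 'a = complex]
    have "(\<lambda>j. complex_of_real (kernel_coeff \<alpha> k * moment_trunc (exhausting_radius j) k)) \<longlonglongrightarrow> 1"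
      by simp
    from tendsto_mult_left[OF this, of "taylor_coeff f k * w ^ k"] show ?thesis
      by (simp add: c_def)
  qed
  text \<open>Each factor \<open>kernel_coeff \<alpha> k * moment_trunc r k\<close> lies in \<open>[0, 1]\<close>, so Tannery's theorem applies.\<close>
  have c_bound: "norm (c k j) \<le> norm (taylor_coeff f k) * cmod w ^ k" for k j
  proof -
    have "0 \<le> kernel_coeff \<alpha> k * moment_trunc (exhausting_radius j) k"
      using kernel_coeff_pos[OF alpha_gt, of k] moment_trunc_bounds(1) by simp
    moreover have "kernel_coeff \<alpha> k * moment_trunc (exhausting_radius j) k \<le> 1"
      using kernel_coeff_pos[OF alpha_gt, of k] moment_trunc_bounds(2)[of "exhausting_radius j" k] alpha_gt
      by (simp add: kernel_coeff_def field_simps pochhammer_pos)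
    ultimately show ?thesis
      by (simp add: c_def norm_mult norm_power mult_left_le)
  qed
  have "summable (\<lambda>k. norm (taylor_coeff f k) * cmod w ^ k)"
    using summable_norm_taylor_coeff[OF f] w by simp
  from tannerys_theorem[where a = c and b = "\<lambda>k. taylor_coeff f k * w ^ k"
      and M = "\<lambda>k. norm (taylor_coeff f k) * cmod w ^ k" and F = sequentially, OF c_lim _ this]
  have "(\<lambda>j. \<Sum>k. c k j) \<longlonglongrightarrow> (\<Sum>k. taylor_coeff f k * w ^ k)"
    using c_bound by (auto intro: always_eventually)
  moreover have "(\<lambda>j. \<Sum>k. c k j) \<longlonglongrightarrow> (\<integral>z. weight z *\<^sub>R (f z * cnj (bergman_kernel \<alpha> w z)) \<partial>lborel)"
    using tendsto_integral_weight_trunc[OF cont int] exhausting_radius_bounds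
    by (simp add: c_def integral_weight_trunc_kernel[OF f w])
  ultimately have "(\<integral>z. weight z *\<^sub>R (f z * cnj (bergman_kernel \<alpha> w z)) \<partial>lborel) = (\<Sum>k. taylor_coeff f k * w ^ k)"
    by (rule LIMSEQ_unique[rotated])
  then show ?thesis
    using taylor_coeff_sums[OF f w] by (simp add: sums_iff)
qed

section \<open>The weighted Bergman space\<close>

lemma dA_alpha_eq_weight:
  fixes F :: "complex \<Rightarrow> 'b::{banach, second_countable_topology}"
  assumes F: "continuous_on (ball 0 1) F"
  shows integrable_dA_alpha_iff: "integrable (dA_alpha \<alpha>) F \<longleftrightarrow> integrable lborel (\<lambda>z. weight z *\<^sub>R F z)"
    and integral_dA_alpha: "integral\<^sup>L (dA_alpha \<alpha>) F = (\<integral>z. weight z *\<^sub>R F z \<partial>lborel)"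
proof -
  define \<rho> where "\<rho> z = (\<alpha> + 1) / pi * (1 - (cmod z)\<^sup>2) powr \<alpha>" for z :: complex
  have dA: "dA_alpha \<alpha> = density (restrict_space lborel (ball 0 1)) (\<lambda>z. ennreal (\<rho> z))"
    by (simp add: dA_alpha_def \<rho>_def)
  have "F \<in> borel_measurable (restrict_space borel (ball 0 1))"
    by (rule borel_measurable_continuous_on_restrict[OF F])
  moreover have "sets (restrict_space lborel (ball (0::complex) 1)) = sets (restrict_space borel (ball 0 1))"
    by (rule sets_restrict_space_cong) simp
  ultimately have F_meas: "F \<in> borel_measurable (restrict_space lborel (ball 0 1))"
    using measurable_cong_sets by blast
  have \<rho>_meas: "\<rho> \<in> borel_measurable (restrict_space lborel (ball 0 1))"
    by (intro measurable_restrict_space1) (simp add: \<rho>_def[abs_def])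
  have \<rho>_nonneg: "AE z in restrict_space lborel (ball 0 1). 0 \<le> \<rho> z"
    using alpha_gt by (intro AE_I2) (simp add: \<rho>_def)
  have "(\<lambda>z. indicator (ball 0 1) z *\<^sub>R (\<rho> z *\<^sub>R F z)) = (\<lambda>z. weight z *\<^sub>R F z)"
    and "(\<lambda>z. (indicator (ball 0 1) z * \<rho> z) *\<^sub>R F z) = (\<lambda>z. weight z *\<^sub>R F z)"
    by (auto simp: fun_eq_iff weight_def \<rho>_def indicator_def)
  then show "integrable (dA_alpha \<alpha>) F \<longleftrightarrow> integrable lborel (\<lambda>z. weight z *\<^sub>R F z)"
    and "integral\<^sup>L (dA_alpha \<alpha>) F = (\<integral>z. weight z *\<^sub>R F z \<partial>lborel)"
    unfolding dA integrable_density[OF F_meas \<rho>_meas \<rho>_nonneg] integral_density[OF F_meas \<rho>_meas \<rho>_nonneg]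
    by (simp_all add: integrable_restrict_space integral_restrict_space)
qed

lemma mem_bergman_iff:
  "f \<in> bergman \<alpha> \<longleftrightarrow> f holomorphic_on ball 0 1 \<and> integrable lborel (\<lambda>z. weight z * (cmod (f z))\<^sup>2)"
proof (cases "f holomorphic_on ball 0 1")
  case True
  then have "continuous_on (ball 0 1) (\<lambda>z. (cmod (f z))\<^sup>2)"
    by (intro continuous_intros holomorphic_on_imp_continuous_on)
  then show ?thesis
    using True by (simp add: bergman_def integrable_dA_alpha_iff)
qed (simp add: bergman_def)

lemma bergman_continuous_on: "f \<in> bergman \<alpha> \<Longrightarrow> continuous_on (ball 0 1) f"
  by (simp add: mem_bergman_iff holomorphic_on_imp_continuous_on)

lemma bergman_norm_eq:
  assumes "continuous_on (ball 0 1) f"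
  shows "bergman_norm \<alpha> f = sqrt (\<integral>z. weight z * (cmod (f z))\<^sup>2 \<partial>lborel)"
proof -
  have "continuous_on (ball 0 1) (\<lambda>z. (cmod (f z))\<^sup>2)"
    using assms by (intro continuous_intros)
  then show ?thesis
    by (simp add: bergman_norm_def integral_dA_alpha)
qed

lemma bergman_inner_eq:
  assumes "continuous_on (ball 0 1) f" "continuous_on (ball 0 1) g"
  shows "bergman_inner \<alpha> f g = (\<integral>z. weight z *\<^sub>R (f z * cnj (g z)) \<partial>lborel)"
proof -
  have "continuous_on (ball 0 1) (\<lambda>z. f z * cnj (g z))"
    using assms by (intro continuous_intros)
  then show ?thesis
    by (simp add: bergman_inner_def integral_dA_alpha)
qed

lemma bergman_inner_cong:
  assumes "\<And>z. z \<in> ball 0 1 \<Longrightarrow> f z = f' z" "\<And>z. z \<in> ball 0 1 \<Longrightarrow> g z = g' z"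
  shows "bergman_inner \<alpha> f g = bergman_inner \<alpha> f' g'"
  unfolding bergman_inner_def
  by (intro Bochner_Integration.integral_cong) (auto simp: dA_alpha_def assms)

lemma borel_measurable_weight_times:
  fixes F :: "complex \<Rightarrow> 'b::{banach, second_countable_topology}"
  shows "continuous_on (ball 0 1) F \<Longrightarrow> (\<lambda>z. weight z *\<^sub>R F z) \<in> borel_measurable borel"
  by (rule borel_measurable_scaleR_continuous_on_disc[OF _ borel_measurable_weight weight_outside])

lemma integrable_bergman_product:
  assumes f: "f \<in> bergman \<alpha>" and g: "g \<in> bergman \<alpha>"
  shows "integrable lborel (\<lambda>z. weight z *\<^sub>R (f z * cnj (g z)))"
proof (rule Bochner_Integration.integrable_bound)
  show "integrable lborel (\<lambda>z. weight z * (cmod (f z))\<^sup>2 + weight z * (cmod (g z))\<^sup>2)"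
    using f g unfolding mem_bergman_iff by (intro Bochner_Integration.integrable_add) auto
  have "continuous_on (ball 0 1) (\<lambda>z. f z * cnj (g z))"
    using f g by (intro continuous_intros bergman_continuous_on)
  from borel_measurable_weight_times[OF this]
  show "(\<lambda>z. weight z *\<^sub>R (f z * cnj (g z))) \<in> borel_measurable lborel"
    by simp
  have "norm (weight z *\<^sub>R (f z * cnj (g z))) \<le> norm (weight z * (cmod (f z))\<^sup>2 + weight z * (cmod (g z))\<^sup>2)" for z
  proof -
    have "2 * (cmod (f z) * cmod (g z)) \<le> (cmod (f z))\<^sup>2 + (cmod (g z))\<^sup>2"
      using sum_squares_ge_zero[of "cmod (f z) - cmod (g z)" 0] by (simp add: power2_eq_square algebra_simps)
    moreover have "0 \<le> cmod (f z) * cmod (g z)"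
      by simp
    ultimately have "cmod (f z) * cmod (g z) \<le> (cmod (f z))\<^sup>2 + (cmod (g z))\<^sup>2"
      by linarith
    then have "weight z * (cmod (f z) * cmod (g z)) \<le> weight z * ((cmod (f z))\<^sup>2 + (cmod (g z))\<^sup>2)"
      by (rule mult_left_mono[OF _ weight_nonneg])
    then show ?thesis
      using weight_nonneg[of z] by (simp add: norm_mult distrib_left)
  qed
  then show "AE z in lborel. norm (weight z *\<^sub>R (f z * cnj (g z))) \<le>
      norm (weight z * (cmod (f z))\<^sup>2 + weight z * (cmod (g z))\<^sup>2)"
    by simp
qed

lemma bergman_lincomb:
  assumes f: "f \<in> bergman \<alpha>" and g: "g \<in> bergman \<alpha>"
  shows "(\<lambda>z. c * f z + d * g z) \<in> bergman \<alpha>"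
  unfolding mem_bergman_iff
proof
  show "(\<lambda>z. c * f z + d * g z) holomorphic_on ball 0 1"
    using f g by (intro holomorphic_intros) (simp_all add: mem_bergman_iff)
  have "(cmod (c * f z + d * g z))\<^sup>2 \<le> 2 * (cmod c)\<^sup>2 * (cmod (f z))\<^sup>2 + 2 * (cmod d)\<^sup>2 * (cmod (g z))\<^sup>2" for z
  proof -
    have "cmod (c * f z + d * g z) \<le> cmod c * cmod (f z) + cmod d * cmod (g z)"
      using norm_triangle_ineq[of "c * f z" "d * g z"] by (simp add: norm_mult)
    then have "(cmod (c * f z + d * g z))\<^sup>2 \<le> (cmod c * cmod (f z) + cmod d * cmod (g z))\<^sup>2"
      by (rule power_mono) simp
    also have "\<dots> \<le> 2 * (cmod c * cmod (f z))\<^sup>2 + 2 * (cmod d * cmod (g z))\<^sup>2"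
      using sum_squares_ge_zero[of "cmod c * cmod (f z) - cmod d * cmod (g z)" 0]
      by (simp add: power2_eq_square algebra_simps)
    finally show ?thesis
      by (simp add: power_mult_distrib)
  qed
  then have "weight z * (cmod (c * f z + d * g z))\<^sup>2 \<le>
      weight z * (2 * (cmod c)\<^sup>2 * (cmod (f z))\<^sup>2 + 2 * (cmod d)\<^sup>2 * (cmod (g z))\<^sup>2)" for z
    by (rule mult_left_mono[OF _ weight_nonneg])
  then have bound: "norm (weight z * (cmod (c * f z + d * g z))\<^sup>2) \<le>
      norm (2 * (cmod c)\<^sup>2 * (weight z * (cmod (f z))\<^sup>2) + 2 * (cmod d)\<^sup>2 * (weight z * (cmod (g z))\<^sup>2))" for z
    using weight_nonneg[of z] by (simp add: algebra_simps)
  have "continuous_on (ball 0 1) (\<lambda>z. (cmod (c * f z + d * g z))\<^sup>2)"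
    using f g by (intro continuous_intros bergman_continuous_on)
  from borel_measurable_weight_times[OF this]
  have meas: "(\<lambda>z. weight z * (cmod (c * f z + d * g z))\<^sup>2) \<in> borel_measurable lborel"
    by simp
  have "integrable lborel (\<lambda>z. 2 * (cmod c)\<^sup>2 * (weight z * (cmod (f z))\<^sup>2) + 2 * (cmod d)\<^sup>2 * (weight z * (cmod (g z))\<^sup>2))"
    using f g unfolding mem_bergman_iff
    by (intro Bochner_Integration.integrable_add Bochner_Integration.integrable_mult_right) auto
  then show "integrable lborel (\<lambda>z. weight z * (cmod (c * f z + d * g z))\<^sup>2)"
    using meas by (rule Bochner_Integration.integrable_bound) (intro AE_I2 bound)
qed

lemma bergman_inner_self:
  assumes "f \<in> bergman \<alpha>"
  shows "bergman_inner \<alpha> f f = of_real (\<integral>z. weight z * (cmod (f z))\<^sup>2 \<partial>lborel)"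
proof -
  have "bergman_inner \<alpha> f f = (\<integral>z. complex_of_real (weight z * (cmod (f z))\<^sup>2) \<partial>lborel)"
    unfolding bergman_inner_eq[OF bergman_continuous_on[OF assms] bergman_continuous_on[OF assms]]
    by (intro Bochner_Integration.integral_cong)
       (simp_all add: scaleR_conv_of_real complex_norm_square[unfolded of_real_power])
  then show ?thesis
    by (simp only: integral_complex_of_real)
qed

sublocale B: semi_inner_product_space "bergman \<alpha>" "\<lambda>c f d g z. c * f z + d * g z" "bergman_inner \<alpha>"
proof
  fix f g :: "complex \<Rightarrow> complex" and c d :: complex
  assume "f \<in> bergman \<alpha>" "g \<in> bergman \<alpha>"
  then show "(\<lambda>z. c * f z + d * g z) \<in> bergman \<alpha>"
    by (rule bergman_lincomb)
next
  fix f g h :: "complex \<Rightarrow> complex" and c d :: complex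
  assume f: "f \<in> bergman \<alpha>" and g: "g \<in> bergman \<alpha>" and h: "h \<in> bergman \<alpha>"
  have lincomb_cont: "continuous_on (ball 0 1) (\<lambda>z. c * f z + d * g z)"
    using f g by (intro continuous_intros bergman_continuous_on)
  have "bergman_inner \<alpha> (\<lambda>z. c * f z + d * g z) h =
      (\<integral>z. c * (weight z *\<^sub>R (f z * cnj (h z))) + d * (weight z *\<^sub>R (g z * cnj (h z))) \<partial>lborel)"
    using f g h unfolding bergman_inner_eq[OF lincomb_cont bergman_continuous_on[OF h]]
    by (intro Bochner_Integration.integral_cong) (auto simp: scaleR_conv_of_real algebra_simps)
  also have "\<dots> = c * (\<integral>z. weight z *\<^sub>R (f z * cnj (h z)) \<partial>lborel) + d * (\<integral>z. weight z *\<^sub>R (g z * cnj (h z)) \<partial>lborel)"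
    by (simp only: Bochner_Integration.integral_add integral_mult_right_zero
        Bochner_Integration.integrable_mult_right integrable_bergman_product f g h)
  also have "\<dots> = c * bergman_inner \<alpha> f h + d * bergman_inner \<alpha> g h"
    using f g h by (simp add: bergman_inner_eq bergman_continuous_on)
  finally show "bergman_inner \<alpha> (\<lambda>z. c * f z + d * g z) h = c * bergman_inner \<alpha> f h + d * bergman_inner \<alpha> g h" .
next
  fix f g :: "complex \<Rightarrow> complex"
  assume f: "f \<in> bergman \<alpha>" and g: "g \<in> bergman \<alpha>"
  have "cnj (bergman_inner \<alpha> f g) = (\<integral>z. cnj (weight z *\<^sub>R (f z * cnj (g z))) \<partial>lborel)"
    unfolding bergman_inner_eq[OF bergman_continuous_on[OF f] bergman_continuous_on[OF g]]
    by (rule Bochner_Integration.integral_cnj[symmetric])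
  also have "\<dots> = bergman_inner \<alpha> g f"
    using f g by (simp add: bergman_inner_eq bergman_continuous_on scaleR_conv_of_real mult.commute)
  finally show "bergman_inner \<alpha> g f = cnj (bergman_inner \<alpha> f g)" ..
next
  fix f :: "complex \<Rightarrow> complex"
  assume "f \<in> bergman \<alpha>"
  moreover have "(\<integral>z. weight z * (cmod (f z))\<^sup>2 \<partial>lborel) \<ge> 0"
    using weight_nonneg by (intro integral_nonneg_AE) auto
  ultimately show "Im (bergman_inner \<alpha> f f) = 0 \<and> Re (bergman_inner \<alpha> f f) \<ge> 0"
    by (simp add: bergman_inner_self)
qed

lemma nrm_eq_bergman_norm: "f \<in> bergman \<alpha> \<Longrightarrow> B.nrm f = bergman_norm \<alpha> f"
  by (simp add: B.nrm_def bergman_inner_self bergman_norm_eq bergman_continuous_on)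

text \<open>Otherwise the integrand of the norm would be positive on a small disc.\<close>
lemma bergman_null_vanishes:
  assumes f: "f \<in> bergman \<alpha>" and null: "B.nrm f = 0" and z: "z \<in> ball 0 1"
  shows "f z = 0"
proof (rule ccontr)
  assume "f z \<noteq> 0"
  then obtain e where e: "e > 0" "\<And>y. y \<in> ball 0 1 \<Longrightarrow> dist z y < e \<Longrightarrow> f y \<noteq> 0"
    using continuous_on_avoid[OF bergman_continuous_on[OF f] z] by blast
  define d where "d = min e (1 - cmod z)"
  have d: "d > 0"
    using e z by (simp add: d_def)
  have int: "integrable lborel (\<lambda>y. weight y * (cmod (f y))\<^sup>2)"
    using f by (simp add: mem_bergman_iff)
  have "(\<integral>y. weight y * (cmod (f y))\<^sup>2 \<partial>lborel) = 0"
    using null f by (simp add: B.nrm_def bergman_inner_self)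
  then have "AE y in lborel. weight y * (cmod (f y))\<^sup>2 = 0"
    using integral_nonneg_eq_0_iff_AE[OF int] weight_nonneg by simp
  then obtain N where N: "{y \<in> space lborel. \<not> weight y * (cmod (f y))\<^sup>2 = 0} \<subseteq> N"
    "emeasure lborel N = 0" "N \<in> sets lborel"
    by (rule AE_E)
  have "ball z d \<subseteq> {y. weight y * (cmod (f y))\<^sup>2 \<noteq> 0}"
  proof
    fix y
    assume y: "y \<in> ball z d"
    then have "cmod y < 1"
      using norm_triangle_ineq2[of y z] by (simp add: d_def dist_norm norm_minus_commute)
    moreover have "f y \<noteq> 0"
      using e y \<open>cmod y < 1\<close> by (auto simp: d_def)
    ultimately show "y \<in> {y. weight y * (cmod (f y))\<^sup>2 \<noteq> 0}"
      using weight_pos[of y] by auto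
  qed
  then have "emeasure lborel (ball z d) \<le> emeasure lborel N"
    using N by (intro emeasure_mono) auto
  then have "emeasure lborel (ball z d) = 0"
    using N(2) by simp
  moreover have "emeasure lborel (ball z d) > 0"
    using d by (simp add: emeasure_ball unit_ball_vol_def)
  ultimately show False
    by simp
qed

lemma const_in_bergman: "(\<lambda>_. c) \<in> bergman \<alpha>"
  using integrable_weight by (simp add: mem_bergman_iff)

lemma bergman_kernel_bound:
  assumes w: "cmod w < 1" and z: "cmod z < 1"
  shows "cmod (bergman_kernel \<alpha> w z) \<le> (1 - cmod w) powr (- (\<alpha> + 2))"
proof -
  have "cmod (cnj w * z) \<le> cmod w"
    using z by (simp add: norm_mult mult_left_le)
  then have "1 - cmod w \<le> cmod (1 - cnj w * z)"
    using norm_triangle_ineq2[of 1 "cnj w * z"] by simp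
  then have "cmod (1 - cnj w * z) powr (- (\<alpha> + 2)) \<le> (1 - cmod w) powr (- (\<alpha> + 2))"
    using alpha_gt w by (intro powr_mono2') auto
  then show ?thesis
    unfolding bergman_kernel_def by (subst norm_powr_real_powr') auto
qed

lemma bergman_kernel_in_bergman:
  assumes w: "w \<in> ball 0 1"
  shows "bergman_kernel \<alpha> w \<in> bergman \<alpha>"
  unfolding mem_bergman_iff
proof
  show holo: "bergman_kernel \<alpha> w holomorphic_on ball 0 1"
    using w by (simp add: bergman_kernel_holomorphic)
  define C where "C = ((1 - cmod w) powr (- (\<alpha> + 2)))\<^sup>2"
  have "continuous_on (ball 0 1) (\<lambda>z. (cmod (bergman_kernel \<alpha> w z))\<^sup>2)"
    using holo by (intro continuous_intros holomorphic_on_imp_continuous_on)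
  from borel_measurable_weight_times[OF this]
  have "(\<lambda>z. weight z * (cmod (bergman_kernel \<alpha> w z))\<^sup>2) \<in> borel_measurable borel"
    by simp
  moreover have "norm (weight z * (cmod (bergman_kernel \<alpha> w z))\<^sup>2) \<le> C * weight z" for z
  proof (cases "cmod z < 1")
    case True
    then have "(cmod (bergman_kernel \<alpha> w z))\<^sup>2 \<le> C"
      unfolding C_def using bergman_kernel_bound[of w z] w by (intro power_mono) auto
    then have "weight z * (cmod (bergman_kernel \<alpha> w z))\<^sup>2 \<le> weight z * C"
      by (rule mult_left_mono[OF _ weight_nonneg])
    then show ?thesis
      using weight_nonneg[of z] by (simp add: mult.commute)
  qed (simp add: weight_def)
  ultimately show "integrable lborel (\<lambda>z. weight z * (cmod (bergman_kernel \<alpha> w z))\<^sup>2)"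
    by (rule integrable_bounded_by_weight)
qed

theorem bergman_reproducing:
  assumes w: "w \<in> ball 0 1" and f: "f \<in> bergman \<alpha>"
  shows "bergman_inner \<alpha> f (bergman_kernel \<alpha> w) = f w"
proof -
  have K: "bergman_kernel \<alpha> w \<in> bergman \<alpha>"
    using w by (rule bergman_kernel_in_bergman)
  have "bergman_inner \<alpha> f (bergman_kernel \<alpha> w) =
      (\<integral>z. weight z *\<^sub>R (f z * cnj (bergman_kernel \<alpha> w z)) \<partial>lborel)"
    using f K by (simp add: bergman_inner_eq bergman_continuous_on)
  also have "\<dots> = f w"
    using f w integrable_bergman_product[OF f K] by (simp add: integral_weight_kernel mem_bergman_iff)
  finally show ?thesis .
qed

lemma bergman_norm_kernel:
  assumes w: "w \<in> ball 0 1"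
  shows "bergman_norm \<alpha> (bergman_kernel \<alpha> w) = (1 - (cmod w)\<^sup>2) powr (- (\<alpha> / 2 + 1))"
proof -
  have K: "bergman_kernel \<alpha> w \<in> bergman \<alpha>"
    using w by (rule bergman_kernel_in_bergman)
  have pos: "0 < 1 - (cmod w)\<^sup>2"
    using w by (simp add: abs_square_less_1)
  have "1 - cnj w * w = complex_of_real (1 - (cmod w)\<^sup>2)"
    by (simp add: mult.commute flip: complex_norm_square)
  then have "bergman_kernel \<alpha> w w = of_real ((1 - (cmod w)\<^sup>2) powr (- (\<alpha> + 2)))"
    using pos unfolding bergman_kernel_def by (simp add: powr_of_real[symmetric])
  then have "bergman_inner \<alpha> (bergman_kernel \<alpha> w) (bergman_kernel \<alpha> w) = of_real ((1 - (cmod w)\<^sup>2) powr (- (\<alpha> + 2)))"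
    using bergman_reproducing[OF w K] by simp
  moreover have "bergman_inner \<alpha> (bergman_kernel \<alpha> w) (bergman_kernel \<alpha> w) =
      of_real ((bergman_norm \<alpha> (bergman_kernel \<alpha> w))\<^sup>2)"
    using B.ip_self[OF K] by (simp add: nrm_eq_bergman_norm[OF K])
  ultimately have "(bergman_norm \<alpha> (bergman_kernel \<alpha> w))\<^sup>2 = (1 - (cmod w)\<^sup>2) powr (- (\<alpha> + 2))"
    by (metis of_real_eq_iff)
  also have "\<dots> = ((1 - (cmod w)\<^sup>2) powr (- (\<alpha> / 2 + 1)))\<^sup>2"
    using pos by (simp add: powr_powr[symmetric] powr_realpow[symmetric] powr_powr)
  finally show ?thesis
    using nrm_eq_bergman_norm[OF K] B.nrm_nonneg[OF K]
    by (simp add: power2_eq_iff_nonneg)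
qed

lemma bergman_norm_kernel_pos: "w \<in> ball 0 1 \<Longrightarrow> bergman_norm \<alpha> (bergman_kernel \<alpha> w) > 0"
proof -
  assume w: "w \<in> ball 0 1"
  then have "0 < 1 - (cmod w)\<^sup>2"
    by (simp add: abs_square_less_1)
  then show ?thesis
    by (simp add: bergman_norm_kernel[OF w])
qed

text \<open>A null projection of \<open>z\<close> orthogonal to \<open>K\<close> would vanish on the disc; vanishing at \<open>0\<close> forces it
  to be \<open>z\<close> itself, which does not vanish at \<open>1/2\<close>.\<close>
lemma bergman_orthogonal_unit_exists:
  assumes K: "K \<in> bergman \<alpha>" and K0: "K 0 \<noteq> 0" and K_pos: "B.nrm K > 0"
  obtains q where "q \<in> bergman \<alpha>" "bergman_inner \<alpha> q q = 1" "bergman_inner \<alpha> q K = 0"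
proof -
  have id: "(\<lambda>z. z) \<in> bergman \<alpha>"
    using integrable_weight_moment[of 1] by (simp add: mem_bergman_iff)
  define c where "c = bergman_inner \<alpha> (\<lambda>z. z) K / bergman_inner \<alpha> K K"
  define r where "r = (\<lambda>z. 1 * z + - c * K z)"
  note proj = B.orthogonal_projection[OF K id K_pos, folded c_def, folded r_def]
  have "B.nrm r > 0"
  proof (rule ccontr)
    assume "\<not> B.nrm r > 0"
    then have null: "B.nrm r = 0"
      using B.nrm_nonneg[OF proj(1)] by simp
    have "r 0 = 0"
      by (rule bergman_null_vanishes[OF proj(1) null]) simp
    then have "c = 0"
      using K0 by (simp add: r_def)
    moreover have "r (1/2) = 0"
      by (rule bergman_null_vanishes[OF proj(1) null]) simp
    ultimately show False
      by (simp add: r_def)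
  qed
  then obtain q where q: "q \<in> bergman \<alpha>" "bergman_inner \<alpha> q q = 1"
    and r_f: "\<And>f. f \<in> bergman \<alpha> \<Longrightarrow> bergman_inner \<alpha> r f = of_real (B.nrm r) * bergman_inner \<alpha> q f"
    using B.unit_vector_exists[OF proj(1)] by blast
  have "bergman_inner \<alpha> q K = 0"
    using r_f[OF K] proj(2) \<open>B.nrm r > 0\<close> by simp
  with q show ?thesis
    by (rule that)
qed

lemma numerical_range_wcomp_const:
  assumes w: "w \<in> ball 0 1" and \<psi>: "\<psi> \<in> bergman \<alpha>"
  shows "numerical_range \<alpha> (wcomp \<psi> (\<lambda>_. w)) =
    {v. cmod v + cmod (v - \<psi> w) \<le> bergman_norm \<alpha> \<psi> * bergman_norm \<alpha> (bergman_kernel \<alpha> w)}"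
proof -
  define K where "K = bergman_kernel \<alpha> w"
  have K: "K \<in> bergman \<alpha>"
    unfolding K_def using w by (rule bergman_kernel_in_bergman)
  have K_pos: "B.nrm K > 0"
    using w by (simp add: K_def nrm_eq_bergman_norm[OF K[unfolded K_def]] bergman_norm_kernel_pos)
  have "K 0 \<noteq> 0"
    by (simp add: K_def bergman_kernel_def powr_def)
  then obtain q where q: "q \<in> bergman \<alpha>" "bergman_inner \<alpha> q q = 1" "bergman_inner \<alpha> q K = 0"
    using bergman_orthogonal_unit_exists[OF K _ K_pos] by blast
  text \<open>\<open>C\<^sub>\<psi>\<^sub>,\<^sub>w f = f(w) \<psi> = ip f K \<cdot> \<psi>\<close> is a rank-one operator.\<close>
  have "bergman_inner \<alpha> (wcomp \<psi> (\<lambda>_. w) f) f = bergman_inner \<alpha> f K * bergman_inner \<alpha> \<psi> f"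
    if f: "f \<in> bergman \<alpha>" for f
  proof -
    have rank_one: "wcomp \<psi> (\<lambda>_. w) f = (\<lambda>z. f w * \<psi> z + 0 * \<psi> z)"
      by (simp add: wcomp_def fun_eq_iff mult.commute)
    have "bergman_inner \<alpha> (wcomp \<psi> (\<lambda>_. w) f) f = f w * bergman_inner \<alpha> \<psi> f + 0 * bergman_inner \<alpha> \<psi> f"
      unfolding rank_one by (rule B.ip_lc_left[OF \<psi> \<psi> f])
    then show ?thesis
      using f w by (simp add: K_def bergman_reproducing)
  qed
  then have "numerical_range \<alpha> (wcomp \<psi> (\<lambda>_. w)) =
      {bergman_inner \<alpha> f K * bergman_inner \<alpha> \<psi> f | f. f \<in> bergman \<alpha> \<and> B.nrm f = 1}"
    unfolding numerical_range_def by (metis (no_types, lifting) nrm_eq_bergman_norm)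
  also have "\<dots> = {v. cmod v + cmod (v - bergman_inner \<alpha> \<psi> K) \<le> B.nrm \<psi> * B.nrm K}"
    by (rule B.rank_one_numerical_range[OF K \<psi> K_pos q])
  finally show ?thesis
    using \<psi> K w by (simp add: K_def nrm_eq_bergman_norm bergman_reproducing)
qed

lemma bergman_kernel_multiple:
  assumes w: "w \<in> ball 0 1" and \<psi>: "\<psi> \<in> bergman \<alpha>"
    and K_eq: "\<forall>z\<in>ball 0 1. bergman_kernel \<alpha> w z = \<mu> * \<psi> z"
  shows "\<psi> w = cnj \<mu> * of_real ((bergman_norm \<alpha> \<psi>)\<^sup>2)"
    and "bergman_norm \<alpha> \<psi> * bergman_norm \<alpha> (bergman_kernel \<alpha> w) = cmod (\<psi> w)"
proof -
  have K_f: "bergman_inner \<alpha> f (bergman_kernel \<alpha> w) = cnj \<mu> * bergman_inner \<alpha> f \<psi>" if "f \<in> bergman \<alpha>" for f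
  proof -
    have "bergman_inner \<alpha> f (bergman_kernel \<alpha> w) = bergman_inner \<alpha> f (\<lambda>z. \<mu> * \<psi> z + 0 * \<psi> z)"
      using K_eq by (intro bergman_inner_cong) auto
    also have "\<dots> = cnj \<mu> * bergman_inner \<alpha> f \<psi> + cnj 0 * bergman_inner \<alpha> f \<psi>"
      by (rule B.ip_lc_right[OF \<psi> \<psi> that])
    finally show ?thesis
      by simp
  qed
  have \<psi>\<psi>: "bergman_inner \<alpha> \<psi> \<psi> = of_real ((bergman_norm \<alpha> \<psi>)\<^sup>2)"
    using B.ip_self[OF \<psi>] by (simp add: nrm_eq_bergman_norm[OF \<psi>])
  show \<psi>_w: "\<psi> w = cnj \<mu> * of_real ((bergman_norm \<alpha> \<psi>)\<^sup>2)"
    using K_f[OF \<psi>] bergman_reproducing[OF w \<psi>] \<psi>\<psi> by simp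
  have K: "bergman_kernel \<alpha> w \<in> bergman \<alpha>"
    using w by (rule bergman_kernel_in_bergman)
  have "complex_of_real ((bergman_norm \<alpha> (bergman_kernel \<alpha> w))\<^sup>2) =
      bergman_inner \<alpha> (bergman_kernel \<alpha> w) (bergman_kernel \<alpha> w)"
    using B.ip_self[OF K] by (simp add: nrm_eq_bergman_norm[OF K])
  also have "\<dots> = \<mu> * cnj \<mu> * bergman_inner \<alpha> \<psi> \<psi>"
    using K_f[OF K] K_f[OF \<psi>] B.ip_conj_sym[OF \<psi> K] \<psi>\<psi> by simp
  also have "\<dots> = complex_of_real ((cmod \<mu> * bergman_norm \<alpha> \<psi>)\<^sup>2)"
    using \<psi>\<psi> by (simp add: power_mult_distrib flip: complex_norm_square)
  finally have "(bergman_norm \<alpha> (bergman_kernel \<alpha> w))\<^sup>2 = (cmod \<mu> * bergman_norm \<alpha> \<psi>)\<^sup>2"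
    by (simp only: of_real_eq_iff)
  then have "bergman_norm \<alpha> (bergman_kernel \<alpha> w) = cmod \<mu> * bergman_norm \<alpha> \<psi>"
    using B.nrm_nonneg[OF K] B.nrm_nonneg[OF \<psi>]
    by (simp add: nrm_eq_bergman_norm[OF K] nrm_eq_bergman_norm[OF \<psi>] power2_eq_iff_nonneg)
  then show "bergman_norm \<alpha> \<psi> * bergman_norm \<alpha> (bergman_kernel \<alpha> w) = cmod (\<psi> w)"
    using B.nrm_nonneg[OF \<psi>] by (simp add: \<psi>_w norm_mult nrm_eq_bergman_norm[OF \<psi>] power2_eq_square)
qed

lemma eval_eq_cnj_inner_kernel:
  assumes "w \<in> ball 0 1" "\<psi> \<in> bergman \<alpha>"
  shows "\<psi> w = cnj (bergman_inner \<alpha> (bergman_kernel \<alpha> w) \<psi>)"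
  using assms B.ip_conj_sym[OF bergman_kernel_in_bergman assms(2)] by (simp add: bergman_reproducing)

lemma bergman_kernel_not_multiple:
  assumes w: "w \<in> ball 0 1" and \<psi>: "\<psi> \<in> bergman \<alpha>"
    and not_multiple: "\<not> (\<exists>\<mu>. \<mu> \<noteq> 0 \<and> (\<forall>z\<in>ball 0 1. bergman_kernel \<alpha> w z = \<mu> * \<psi> z))"
    and \<psi>_w: "\<psi> w \<noteq> 0"
  shows "cmod (\<psi> w) < bergman_norm \<alpha> \<psi> * bergman_norm \<alpha> (bergman_kernel \<alpha> w)"
proof -
  define K where "K = bergman_kernel \<alpha> w"
  have K: "K \<in> bergman \<alpha>"
    unfolding K_def using w by (rule bergman_kernel_in_bergman)
  have K_pos: "B.nrm K > 0"
    using w by (simp add: K_def nrm_eq_bergman_norm[OF K[unfolded K_def]] bergman_norm_kernel_pos)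
  define c where "c = bergman_inner \<alpha> \<psi> K / bergman_inner \<alpha> K K"
  define r where "r = (\<lambda>z. 1 * \<psi> z + - c * K z)"
  note proj = B.orthogonal_projection[OF K \<psi> K_pos, folded c_def, folded r_def]
  have "c \<noteq> 0"
    using proj(3) \<psi>_w w \<psi> by (auto simp: K_def bergman_reproducing)
  have "B.nrm r > 0"
  proof (rule ccontr)
    assume "\<not> B.nrm r > 0"
    then have "B.nrm r = 0"
      using B.nrm_nonneg[OF proj(1)] by simp
    then have "K z = (1 / c) * \<psi> z" if "z \<in> ball 0 1" for z
      using bergman_null_vanishes[OF proj(1) _ that] \<open>c \<noteq> 0\<close> by (simp add: r_def field_simps)
    then have "\<exists>\<mu>. \<mu> \<noteq> 0 \<and> (\<forall>z\<in>ball 0 1. bergman_kernel \<alpha> w z = \<mu> * \<psi> z)"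
      using \<open>c \<noteq> 0\<close> by (intro exI[of _ "1 / c"]) (simp add: K_def)
    then show False
      using not_multiple by blast
  qed
  then have "cmod (bergman_inner \<alpha> \<psi> K) < B.nrm \<psi> * B.nrm K"
    using B.cauchy_schwarz_strict[OF K \<psi> K_pos] by (simp add: r_def c_def)
  then show ?thesis
    using w \<psi> K by (simp add: K_def bergman_reproducing nrm_eq_bergman_norm)
qed

end

theorem proposition4p2:
  fixes \<alpha> :: real and w :: complex and \<psi> :: "complex \<Rightarrow> complex"
  assumes "\<alpha> > -1"
    and "w \<in> ball 0 1"
    and "\<psi> holomorphic_on ball 0 1"
    and "bounded_on_bergman \<alpha> (wcomp \<psi> (\<lambda>_. w))"
  shows "(\<forall>\<mu>. \<mu> \<noteq> 0 \<and> (\<forall>z\<in>ball 0 1. bergman_kernel \<alpha> w z = \<mu> * \<psi> z) \<longrightarrow>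
            numerical_range \<alpha> (wcomp \<psi> (\<lambda>_. w)) =
              closed_segment 0 (cnj \<mu> * of_real ((bergman_norm \<alpha> \<psi>)\<^sup>2)))
       \<and> (bergman_inner \<alpha> (bergman_kernel \<alpha> w) \<psi> = 0 \<longrightarrow>
            numerical_range \<alpha> (wcomp \<psi> (\<lambda>_. w)) =
              cball 0 (bergman_norm \<alpha> \<psi> / (2 * (1 - (cmod w)\<^sup>2) powr (\<alpha> / 2 + 1))))
       \<and> ((\<not> (\<exists>\<mu>. \<mu> \<noteq> 0 \<and> (\<forall>z\<in>ball 0 1. bergman_kernel \<alpha> w z = \<mu> * \<psi> z)))
            \<and> bergman_inner \<alpha> (bergman_kernel \<alpha> w) \<psi> \<noteq> 0 \<longrightarrow>
            (\<exists>s. s > cmod (\<psi> w) \<and>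
               numerical_range \<alpha> (wcomp \<psi> (\<lambda>_. w)) = {z. cmod z + cmod (z - \<psi> w) \<le> s}))"
proof -
  interpret weighted_bergman \<alpha>
    by unfold_locales (rule assms(1))
  have \<psi>: "\<psi> \<in> bergman \<alpha>"
    using assms(4) const_in_bergman[of 1] by (auto simp: bounded_on_bergman_def wcomp_def)
  note range = numerical_range_wcomp_const[OF assms(2) \<psi>]
  note eval = eval_eq_cnj_inner_kernel[OF assms(2) \<psi>]
  show ?thesis
  proof (intro conjI impI allI)
    fix \<mu> assume "\<mu> \<noteq> 0 \<and> (\<forall>z\<in>ball 0 1. bergman_kernel \<alpha> w z = \<mu> * \<psi> z)"
    then have "\<forall>z\<in>ball 0 1. bergman_kernel \<alpha> w z = \<mu> * \<psi> z"
      by simp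
    note multiple = bergman_kernel_multiple[OF assms(2) \<psi> this]
    show "numerical_range \<alpha> (wcomp \<psi> (\<lambda>_. w)) = closed_segment 0 (cnj \<mu> * of_real ((bergman_norm \<alpha> \<psi>)\<^sup>2))"
      by (simp only: range multiple(2) ellipse_degenerate_segment multiple(1))
  next
    assume "bergman_inner \<alpha> (bergman_kernel \<alpha> w) \<psi> = 0"
    then have "\<psi> w = 0"
      by (simp add: eval)
    moreover have "bergman_norm \<alpha> \<psi> * bergman_norm \<alpha> (bergman_kernel \<alpha> w) / 2 =
        bergman_norm \<alpha> \<psi> / (2 * (1 - (cmod w)\<^sup>2) powr (\<alpha> / 2 + 1))"
      using assms(2) by (simp only: bergman_norm_kernel powr_minus_divide) simp
    ultimately show "numerical_range \<alpha> (wcomp \<psi> (\<lambda>_. w)) =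
        cball 0 (bergman_norm \<alpha> \<psi> / (2 * (1 - (cmod w)\<^sup>2) powr (\<alpha> / 2 + 1)))"
      unfolding range by (auto simp: dist_norm)
  next
    assume "(\<not> (\<exists>\<mu>. \<mu> \<noteq> 0 \<and> (\<forall>z\<in>ball 0 1. bergman_kernel \<alpha> w z = \<mu> * \<psi> z)))
        \<and> bergman_inner \<alpha> (bergman_kernel \<alpha> w) \<psi> \<noteq> 0"
    then show "\<exists>s. s > cmod (\<psi> w) \<and> numerical_range \<alpha> (wcomp \<psi> (\<lambda>_. w)) = {z. cmod z + cmod (z - \<psi> w) \<le> s}"
      using bergman_kernel_not_multiple[OF assms(2) \<psi>] eval range by auto
  qed
qed

end
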